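(* Consider uniform sampling of $g$ from the global Clifford group $\mathrm{Cl}_n$ ($n\ge1$) with gate-dependent Pauli noise channels $\Lambda(g)$. Prepare $E_0=|0\cdots0\rangle\langle0\cdots0|$, apply $\omega(g)\Lambda(g)$, measure in the computational basis obtaining $x$ with probability $(E_x|\omega(g)\Lambda(g)|E_0)$, and compute $\hat f(g,x)=\frac{d\,(E_x|\omega(g)|E_0)-1}{d-1}$. Then $$\mathbb{E}_{g,x}[\hat f(g,x)]=\frac1{d+1}\cdot\frac1{d-1}\sum_{a\in\mathsf D\setminus\{0\}}\bar\lambda_a ,$$ i.e. $\frac1{d+1}$ times the average of $\bar\lambda_a$ over the $d-1$ nonzero labels $a$ of diagonal Pauli operators.
   Context: $d=2^n$; $(A|\mathcal X|B)=\mathrm{Tr}(A^\dagger\mathcal X(B))$; $\omega(g)(A)=gAg^\dagger$; $E_x=|x\rangle\langle x|$. Per-qubit Pauli labels $\sigma_{00}=\mathbb 1,\sigma_{01}=X,\sigma_{11}=Y,\sigma_{10}=Z$, $\sigma_a=\bigotimes_i\sigma_{a_i}$; $\mathsf D=\{00,10\}^n$ is the set of labels of diagonal Pauli operators. Pauli channel: $\Lambda(\rho)=\sum_bq_b\sigma_b\rho\sigma_b$ with $q$ a probability vector, eigenvalues $\Lambda(g)(\sigma_a)=\lambda_a(g)\sigma_a$. $Z_z=\bigotimes_iZ^{z_i}$; for $g\in\mathrm{Cl}_n$, $\Xi_z(g)$ is the Pauli $\sigma_b$ with $g^\dagger Z_zg=\pm\sigma_b$. With $p$ uniform on $\mathrm{Cl}_n$: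 $s_a=\sum_z\sum_{g:\Xi_z(g)=\sigma_a}p(g)$ and $\bar\lambda_a=s_a^{-1}\sum_z\sum_{g:\Xi_z(g)=\sigma_a}p(g)\lambda_a(g)$. *)

theory Defs
  imports "HOL-Analysis.Analysis" "Jordan_Normal_Form.Matrix"
begin

definition dagger :: "complex mat \<Rightarrow> complex mat" where
  "dagger A = mat (dim_col A) (dim_row A) (\<lambda>(i,j). cnj (A $$ (j,i)))"

definition mtrace :: "complex mat \<Rightarrow> complex" where
  "mtrace A = (\<Sum>i<dim_row A. A $$ (i,i))"

definition unitary_mat :: "nat \<Rightarrow> complex mat \<Rightarrow> bool" where
  "unitary_mat d U \<longleftrightarrow> U \<in> carrier_mat d d \<and> dagger U * U = 1\<^sub>m d \<and> U * dagger U = 1\<^sub>m d"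

text \<open>Kronecker (tensor) product; the first factor is the most significant one.\<close>
definition kron :: "complex mat \<Rightarrow> complex mat \<Rightarrow> complex mat" where
  "kron A B = mat (dim_row A * dim_row B) (dim_col A * dim_col B)
     (\<lambda>(i,j). A $$ (i div dim_row B, j div dim_col B) * B $$ (i mod dim_row B, j mod dim_col B))"

text \<open>Single-qubit Pauli labels (b1,b2): 00 = 1, 01 = X, 11 = Y, 10 = Z.\<close>
definition pauli1 :: "bool \<times> bool \<Rightarrow> complex mat" where
  "pauli1 p = (case p of
      (False, False) \<Rightarrow> mat_of_rows_list 2 [[1, 0], [0, 1]]
    | (False, True)  \<Rightarrow> mat_of_rows_list 2 [[0, 1], [1, 0]]
    | (True, True)   \<Rightarrow> mat_of_rows_list 2 [[0, -\<i>], [\<i>, 0]]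
    | (True, False)  \<Rightarrow> mat_of_rows_list 2 [[1, 0], [0, -1]])"

type_synonym plabel = "(bool \<times> bool) list"

definition pauli :: "plabel \<Rightarrow> complex mat" where
  "pauli a = foldr (\<lambda>p M. kron (pauli1 p) M) a (1\<^sub>m 1)"

definition labels :: "nat \<Rightarrow> plabel set" where
  "labels n = {a. length a = n}"

definition zero_label :: "nat \<Rightarrow> plabel" where
  "zero_label n = replicate n (False, False)"

definition diag_labels :: "nat \<Rightarrow> plabel set" where
  "diag_labels n = {a. length a = n \<and> (\<forall>p\<in>set a. p \<in> {(False,False), (True,False)})}"

definition Zop :: "bool list \<Rightarrow> complex mat" where
  "Zop z = pauli (map (\<lambda>b. (b, False)) z)"

definition clifford :: "nat \<Rightarrow> complex mat \<Rightarrow> bool" where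
  "clifford n U \<longleftrightarrow> unitary_mat (2^n) U \<and>
     (\<forall>a \<in> labels n. \<exists>b \<in> labels n. \<exists>c::complex. U * pauli a * dagger U = c \<cdot>\<^sub>m pauli b)"

text \<open>G is a set of representatives of Cl_n modulo global phases: a transversal.\<close>
definition clifford_transversal :: "nat \<Rightarrow> complex mat set \<Rightarrow> bool" where
  "clifford_transversal n G \<longleftrightarrow> (\<forall>g\<in>G. clifford n g) \<and>
     (\<forall>U. clifford n U \<longrightarrow> (\<exists>!g\<in>G. \<exists>c::complex. U = c \<cdot>\<^sub>m g))"

definition Xi :: "nat \<Rightarrow> bool list \<Rightarrow> complex mat \<Rightarrow> plabel" where
  "Xi n z g = (THE b. b \<in> labels n \<and>
      (dagger g * Zop z * g = pauli b \<or> dagger g * Zop z * g = - pauli b))"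

definition omega :: "complex mat \<Rightarrow> complex mat \<Rightarrow> complex mat" where
  "omega g A = g * A * dagger g"

definition pauli_channel :: "nat \<Rightarrow> (plabel \<Rightarrow> real) \<Rightarrow> complex mat \<Rightarrow> complex mat" where
  "pauli_channel n q \<rho> =
     mat (2^n) (2^n) (\<lambda>(i,j). \<Sum>b\<in>labels n. complex_of_real (q b) * (pauli b * \<rho> * pauli b) $$ (i,j))"

definition prob_vector :: "nat \<Rightarrow> (plabel \<Rightarrow> real) \<Rightarrow> bool" where
  "prob_vector n q \<longleftrightarrow> (\<forall>b\<in>labels n. 0 \<le> q b) \<and> (\<Sum>b\<in>labels n. q b) = 1"

definition pauli_eig :: "nat \<Rightarrow> (plabel \<Rightarrow> real) \<Rightarrow> plabel \<Rightarrow> complex" where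
  "pauli_eig n q a = (THE c. pauli_channel n q (pauli a) = c \<cdot>\<^sub>m pauli a)"

definition Ebasis :: "nat \<Rightarrow> nat \<Rightarrow> complex mat" where
  "Ebasis n x = mat (2^n) (2^n) (\<lambda>(i,j). if i = x \<and> j = x then 1 else 0)"

definition braket :: "complex mat \<Rightarrow> (complex mat \<Rightarrow> complex mat) \<Rightarrow> complex mat \<Rightarrow> complex" where
  "braket A X B = mtrace (dagger A * X B)"

definition s_weight :: "nat \<Rightarrow> complex mat set \<Rightarrow> plabel \<Rightarrow> complex" where
  "s_weight n G a = (\<Sum>z\<in>{z. length z = n}. \<Sum>g\<in>{g\<in>G. Xi n z g = a}. 1 / of_nat (card G))"

definition lambda_bar :: "nat \<Rightarrow> complex mat set \<Rightarrow> (complex mat \<Rightarrow> plabel \<Rightarrow> real) \<Rightarrow> plabel \<Rightarrow> complex" where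
  "lambda_bar n G q a = inverse (s_weight n G a) *
     (\<Sum>z\<in>{z. length z = n}. \<Sum>g\<in>{g\<in>G. Xi n z g = a}. (1 / of_nat (card G)) * pauli_eig n (q g) a)"

end

theory Submission
  imports Defs
begin

text \<open>For a single gate \<open>g\<close>, expand the diagonals of \<open>\<omega>(g)\<Lambda>(g)(E\<^sub>0)\<close> and \<open>\<omega>(g)(E\<^sub>0)\<close> in the
  orthogonal basis \<open>Z\<^sub>z\<close> of diagonal matrices. Since \<open>g\<^sup>\<dagger>Z\<^sub>zg = \<plusminus>\<sigma>\<^sub>a\<close> with \<open>a = \<Xi>\<^sub>z(g)\<close> and only
  diagonal Paulis have a nonzero \<open>(0,0)\<close> entry, Parseval gives
  \<open>d \<Sum>\<^sub>x p(x) (E\<^sub>x|\<omega>(g)|E\<^sub>0) = \<Sum>\<^sub>z [\<Xi>\<^sub>z(g) diagonal] \<lambda>\<^bsub>\<Xi>\<^sub>z(g)\<^esub>(g)\<close>; the term \<open>z = 0\<close> equals 1 and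
  cancels the \<open>-1\<close> in the estimator. Averaging over \<open>g\<close> turns the remaining sum into the sum
  of \<open>s\<^sub>a\<close> times the averaged eigenvalue over the nonzero diagonal labels \<open>a\<close>, so it remains to
  show \<open>s\<^sub>a = 1/(d+1)\<close>. For anticommuting
  \<open>a\<close>, \<open>b\<close> the Clifford \<open>(\<sigma>\<^sub>a + \<sigma>\<^sub>b)/\<surd>2\<close> conjugates \<open>\<sigma>\<^sub>a\<close> to \<open>\<sigma>\<^sub>b\<close>, and right multiplication by it
  maps the pairs \<open>(z,g)\<close> with \<open>\<Xi>\<^sub>z(g) = a\<close> injectively to those with \<open>\<Xi>\<^sub>z(g) = b\<close>. Any two
  nonzero labels anticommute with a common third one, so all \<open>d\<^sup>2 - 1\<close> nonzero labels are hit
  equally often, while the zero label is hit exactly by \<open>z = 0\<close>. Counting the \<open>d|G|\<close> pairs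
  gives \<open>|G| + (d\<^sup>2 - 1) s\<^sub>a |G| = d|G|\<close>.\<close>

section \<open>Matrix preliminaries\<close>

lemma index_mult_mat_sum:
  assumes "A \<in> carrier_mat m k" "B \<in> carrier_mat k n" "i < m" "j < n"
  shows "(A * B) $$ (i,j) = (\<Sum>l<k. A $$ (i,l) * B $$ (l,j))"
  using assms by (auto simp: scalar_prod_def atLeast0LessThan intro!: sum.cong)

declare index_mult_mat(1)[simp del]

lemma smult_smult_mat[simp]: "a \<cdot>\<^sub>m (b \<cdot>\<^sub>m A) = (a * b) \<cdot>\<^sub>m (A :: 'a :: semigroup_mult mat)"
  by (rule eq_matI) (auto simp: mult.assoc)

lemma one_smult_mat[simp]: "1 \<cdot>\<^sub>m A = (A :: 'a :: monoid_mult mat)"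
  by (rule eq_matI) auto

lemma smult_mult_mat:
  "dim_col A = dim_row B \<Longrightarrow> (k \<cdot>\<^sub>m A) * B = k \<cdot>\<^sub>m (A * (B :: 'a :: comm_semiring_0 mat))"
  by (rule mult_smult_assoc_mat) (auto intro: carrier_matI)

lemma mult_smult_mat:
  "dim_col A = dim_row B \<Longrightarrow> A * (k \<cdot>\<^sub>m B) = k \<cdot>\<^sub>m (A * (B :: 'a :: comm_semiring_0 mat))"
  by (rule mult_smult_distrib) (auto intro: carrier_matI)

lemma assoc_mult_mat_dims:
  "dim_col A = dim_row B \<Longrightarrow> dim_col B = dim_row C \<Longrightarrow> A * B * C = A * (B * (C :: 'a :: semiring_0 mat))"
  by (rule assoc_mult_mat) (auto intro: carrier_matI)

lemma uminus_eq_smult_mat: "- A = (-1) \<cdot>\<^sub>m (A :: 'a :: ring_1 mat)"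
  by (rule eq_matI) auto

lemma zero_smult_mat: "0 \<cdot>\<^sub>m (A :: 'a :: mult_zero mat) = 0\<^sub>m (dim_row A) (dim_col A)"
  by (rule eq_matI) auto

lemma smult_one_mat_eq_one_mat_iff:
  "d > 0 \<Longrightarrow> c \<cdot>\<^sub>m 1\<^sub>m d = (1\<^sub>m d :: 'a :: ring_1 mat) \<longleftrightarrow> c = 1"
proof
  assume "d > 0" "c \<cdot>\<^sub>m 1\<^sub>m d = 1\<^sub>m d"
  then have "(c \<cdot>\<^sub>m 1\<^sub>m d) $$ (0,0) = (1\<^sub>m d :: 'a mat) $$ (0,0)" by simp
  with \<open>d > 0\<close> show "c = 1" by simp
qed simp

lemma dagger_carrier[simp]: "A \<in> carrier_mat m n \<Longrightarrow> dagger A \<in> carrier_mat n m"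
  by (auto simp: dagger_def)

lemma dagger_dims[simp]: "dim_row (dagger A) = dim_col A" "dim_col (dagger A) = dim_row A"
  by (auto simp: dagger_def)

lemma dagger_index[simp]: "i < dim_col A \<Longrightarrow> j < dim_row A \<Longrightarrow> dagger A $$ (i,j) = cnj (A $$ (j,i))"
  by (auto simp: dagger_def)

lemma dagger_mult:
  assumes "A \<in> carrier_mat m k" "B \<in> carrier_mat k n"
  shows "dagger (A * B) = dagger B * dagger A"
  by (rule eq_matI) (use assms in \<open>auto simp: index_mult_mat_sum[of _ n k _ m]
      index_mult_mat_sum[of _ m k _ n] mult.commute intro!: sum.cong\<close>)

lemma dagger_smult: "dagger (c \<cdot>\<^sub>m A) = cnj c \<cdot>\<^sub>m dagger A"
  by (rule eq_matI) auto

lemma dagger_add: "A \<in> carrier_mat m n \<Longrightarrow> B \<in> carrier_mat m n \<Longrightarrow> dagger (A + B) = dagger A + dagger B"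
  by (rule eq_matI) auto

lemma mtrace_mult_entries:
  assumes "A \<in> carrier_mat m n" "B \<in> carrier_mat n m"
  shows "mtrace (A * B) = (\<Sum>i<m. \<Sum>l<n. A $$ (i,l) * B $$ (l,i))"
  unfolding mtrace_def using assms by (auto simp: index_mult_mat_sum intro!: sum.cong)

lemma mtrace_mult_commute:
  assumes "A \<in> carrier_mat m n" "B \<in> carrier_mat n m"
  shows "mtrace (A * B) = mtrace (B * A)"
  unfolding mtrace_mult_entries[OF assms] mtrace_mult_entries[OF assms(2,1)]
  by (subst sum.swap) (simp add: mult.commute)

lemma mtrace_smult: "dim_col A = dim_row A \<Longrightarrow> mtrace (c \<cdot>\<^sub>m A) = c * mtrace A"
  by (simp add: mtrace_def sum_distrib_left)

lemma mtrace_one_mat[simp]: "mtrace (1\<^sub>m n) = of_nat n"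
  by (simp add: mtrace_def)

lemma sum_lessThan_mult_split:
  fixes f :: "nat \<Rightarrow> 'a::comm_monoid_add"
  shows "(\<Sum>k<a*b. f k) = (\<Sum>i<a. \<Sum>j<b. f (i*b + j))"
proof (induction a)
  case (Suc a)
  have "(\<Sum>k<Suc a * b. f k) = (\<Sum>k\<in>{0..<a*b}. f k) + (\<Sum>k\<in>{a*b..<a*b+b}. f k)"
    by (simp add: atLeast0LessThan[symmetric] add.commute sum.atLeastLessThan_concat)
  also have "(\<Sum>k\<in>{a*b..<a*b+b}. f k) = (\<Sum>j<b. f (a*b + j))"
    by (rule sum.reindex_bij_witness[of _ "\<lambda>j. a*b+j" "\<lambda>k. k - a*b"]) auto
  finally show ?case using Suc by (simp add: atLeast0LessThan)
qed simp

lemma mult_add_less_mult: "i < a \<Longrightarrow> j < (b::nat) \<Longrightarrow> i * b + j < a * b"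
proof -
  assume "i < a" "j < b"
  then have "i * b + j < Suc i * b" by simp
  also have "\<dots> \<le> a * b" using \<open>i < a\<close> by (intro mult_le_mono1) simp
  finally show ?thesis .
qed

lemma mod_less_of_less_mult: "(i::nat) < a * b \<Longrightarrow> i mod b < b"
  by (cases "b = 0") auto

lemma kron_carrier[simp]:
  "A \<in> carrier_mat a1 a2 \<Longrightarrow> B \<in> carrier_mat b1 b2 \<Longrightarrow> kron A B \<in> carrier_mat (a1*b1) (a2*b2)"
  by (auto simp: kron_def)

lemma kron_dims[simp]:
  "dim_row (kron A B) = dim_row A * dim_row B" "dim_col (kron A B) = dim_col A * dim_col B"
  by (auto simp: kron_def)

lemma kron_index:
  "i < dim_row A * dim_row B \<Longrightarrow> j < dim_col A * dim_col B \<Longrightarrow>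
   kron A B $$ (i,j) = A $$ (i div dim_row B, j div dim_col B) * B $$ (i mod dim_row B, j mod dim_col B)"
  by (auto simp: kron_def)

lemma kron_index_block:
  "i < dim_row A \<Longrightarrow> k < dim_row B \<Longrightarrow> j < dim_col A \<Longrightarrow> l < dim_col B \<Longrightarrow>
   kron A B $$ (i * dim_row B + k, j * dim_col B + l) = A $$ (i,j) * B $$ (k,l)"
  by (simp add: kron_index mult_add_less_mult)

lemma kron_mixed_product:
  assumes A: "A \<in> carrier_mat a1 a2" and B: "B \<in> carrier_mat b1 b2"
    and C: "C \<in> carrier_mat a2 c2" and D: "D \<in> carrier_mat b2 d2"
  shows "kron A B * kron C D = kron (A * C) (B * D)"
proof (rule eq_matI)
  fix i j assume "i < dim_row (kron (A * C) (B * D))" "j < dim_col (kron (A * C) (B * D))"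
  then have i: "i < a1 * b1" and j: "j < c2 * d2" using A B C D by auto
  then have ij: "i div b1 < a1" "i mod b1 < b1" "j div d2 < c2" "j mod d2 < d2"
    by (auto simp: less_mult_imp_div_less mod_less_of_less_mult)
  have "(kron A B * kron C D) $$ (i,j) = (\<Sum>l<a2*b2. kron A B $$ (i,l) * kron C D $$ (l,j))"
    using A B C D i j by (intro index_mult_mat_sum) auto
  also have "\<dots> = (\<Sum>l1<a2. \<Sum>l2<b2. kron A B $$ (i,l1*b2+l2) * kron C D $$ (l1*b2+l2,j))"
    by (rule sum_lessThan_mult_split)
  also have "\<dots> = (\<Sum>l1<a2. \<Sum>l2<b2. (A $$ (i div b1, l1) * C $$ (l1, j div d2)) *
                                      (B $$ (i mod b1, l2) * D $$ (l2, j mod d2)))"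
    using A B C D i j by (intro sum.cong refl) (simp add: kron_index mult_add_less_mult)
  also have "\<dots> = kron (A * C) (B * D) $$ (i,j)"
    using A B C D i j ij by (simp add: kron_index index_mult_mat_sum sum_product)
  finally show "(kron A B * kron C D) $$ (i,j) = kron (A * C) (B * D) $$ (i,j)" .
qed (use A B C D in auto)

lemma kron_smult_left: "kron (c \<cdot>\<^sub>m A) B = c \<cdot>\<^sub>m kron A B"
  by (rule eq_matI) (auto simp: kron_index less_mult_imp_div_less mod_less_of_less_mult)

lemma kron_smult_right: "kron A (c \<cdot>\<^sub>m B) = c \<cdot>\<^sub>m kron A B"
  by (rule eq_matI) (auto simp: kron_index less_mult_imp_div_less mod_less_of_less_mult)

lemma kron_one_mat: "b > 0 \<Longrightarrow> kron (1\<^sub>m a) (1\<^sub>m b) = 1\<^sub>m (a*b)"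
proof (rule eq_matI)
  fix i j assume "b > 0" "i < dim_row (1\<^sub>m (a * b))" "j < dim_col (1\<^sub>m (a * b))"
  moreover have "(i div b = j div b \<and> i mod b = j mod b) = (i = j)"
    by (metis div_mult_mod_eq)
  ultimately show "kron (1\<^sub>m a) (1\<^sub>m b) $$ (i, j) = 1\<^sub>m (a * b) $$ (i, j)"
    by (auto simp: kron_index less_mult_imp_div_less)
qed auto

lemma dagger_kron: "dagger (kron A B) = kron (dagger A) (dagger B)"
  by (rule eq_matI) (auto simp: kron_index less_mult_imp_div_less mod_less_of_less_mult)

lemma mtrace_kron:
  assumes "A \<in> carrier_mat a a" "B \<in> carrier_mat b b"
  shows "mtrace (kron A B) = mtrace A * mtrace B"
proof -
  have "kron A B $$ (i * b + j, i * b + j) = A $$ (i,i) * B $$ (j,j)" if "i < a" "j < b" for i j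
    using kron_index_block[of i A j B i j] assms that by simp
  then show ?thesis
    using assms by (simp add: mtrace_def sum_lessThan_mult_split[of _ a b] sum_product)
qed

lemma kron_index_00: "0 < dim_row B \<Longrightarrow> 0 < dim_col B \<Longrightarrow> 0 < dim_row A \<Longrightarrow> 0 < dim_col A \<Longrightarrow>
  kron A B $$ (0,0) = A $$ (0,0) * B $$ (0,0)"
  by (simp add: kron_index)


section \<open>Pauli operators\<close>

lemma pauli1_carrier[simp]: "pauli1 p \<in> carrier_mat 2 2"
  by (cases p) (auto simp: pauli1_def mat_of_rows_list_def split: bool.splits)

lemma pauli1_dims[simp]: "dim_row (pauli1 p) = 2" "dim_col (pauli1 p) = 2"
  by (rule carrier_matD[OF pauli1_carrier])+

lemma pauli1_index: "i < 2 \<Longrightarrow> j < 2 \<Longrightarrow> pauli1 p $$ (i,j) =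
   (case p of (False, False) \<Rightarrow> [[1, 0], [0, 1]]
    | (False, True)  \<Rightarrow> [[0, 1], [1, 0]]
    | (True, True)   \<Rightarrow> [[0, -\<i>], [\<i>, 0]]
    | (True, False)  \<Rightarrow> [[1, 0], [0, -1]]) ! i ! j"
  by (cases p) (auto simp: pauli1_def mat_of_rows_list_def split: bool.splits)

lemma less_2_cases: "(i::nat) < 2 \<longleftrightarrow> i = 0 \<or> i = 1" by auto

lemma mat2_eqI:
  "A \<in> carrier_mat 2 2 \<Longrightarrow> B \<in> carrier_mat 2 2 \<Longrightarrow> A $$ (0,0) = B $$ (0,0) \<Longrightarrow> A $$ (0,1) = B $$ (0,1) \<Longrightarrow>
   A $$ (1,0) = B $$ (1,0) \<Longrightarrow> A $$ (1,1) = B $$ (1,1) \<Longrightarrow> A = B"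
  by (rule eq_matI) (auto simp: less_2_cases)

lemma index_mult_mat2: "A \<in> carrier_mat 2 2 \<Longrightarrow> B \<in> carrier_mat 2 2 \<Longrightarrow> i < 2 \<Longrightarrow> j < 2 \<Longrightarrow>
  (A * B) $$ (i,j) = A $$ (i,0) * B $$ (0,j) + A $$ (i,1) * B $$ (1,j)"
  by (simp add: index_mult_mat_sum numeral_2_eq_2)

text \<open>Labels are vectors in \<open>\<int>\<^sub>2\<^sup>2\<close> per qubit; multiplying Paulis adds labels, and two
  Paulis anticommute iff the symplectic form of their labels is 1.\<close>

definition label1_add :: "bool \<times> bool \<Rightarrow> bool \<times> bool \<Rightarrow> bool \<times> bool" where
  "label1_add p p' = (fst p \<noteq> fst p', snd p \<noteq> snd p')"

definition anticomm1 :: "bool \<times> bool \<Rightarrow> bool \<times> bool \<Rightarrow> bool" where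
  "anticomm1 p p' = ((fst p \<and> snd p') \<noteq> (snd p \<and> fst p'))"

definition pauli1_phase :: "bool \<times> bool \<Rightarrow> bool \<times> bool \<Rightarrow> complex" where
  "pauli1_phase p p' = (if p = (False,False) \<or> p' = (False,False) \<or> p = p' then 1
     else if (p,p') \<in> {((False,True),(True,True)), ((True,True),(True,False)), ((True,False),(False,True))}
     then \<i> else -\<i>)"

definition sign_of :: "bool \<Rightarrow> complex" where
  "sign_of b = (if b then -1 else 1)"

lemma sign_of_mult: "sign_of a * sign_of b = sign_of (a \<noteq> b)"
  by (simp add: sign_of_def)

lemma pauli1_mult: "pauli1 p * pauli1 p' = pauli1_phase p p' \<cdot>\<^sub>m pauli1 (label1_add p p')"
  by (rule mat2_eqI) (cases p; cases p';
      auto simp: index_mult_mat2 pauli1_index label1_add_def pauli1_phase_def split: bool.splits)+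

lemma pauli1_commute: "pauli1 p * pauli1 p' = sign_of (anticomm1 p p') \<cdot>\<^sub>m (pauli1 p' * pauli1 p)"
  by (rule mat2_eqI) (cases p; cases p';
      auto simp: index_mult_mat2 pauli1_index anticomm1_def sign_of_def split: bool.splits)+

lemma dagger_pauli1: "dagger (pauli1 p) = pauli1 p"
  by (rule mat2_eqI) (cases p; auto simp: pauli1_index split: bool.splits)+

lemma pauli1_squared: "pauli1 p * pauli1 p = 1\<^sub>m 2"
  by (rule mat2_eqI) (cases p; auto simp: index_mult_mat2 pauli1_index split: bool.splits)+

lemma mtrace_pauli1: "mtrace (pauli1 p) = (if p = (False,False) then 2 else 0)"
  by (cases p) (auto simp: mtrace_def numeral_2_eq_2 pauli1_index split: bool.splits)

lemma pauli1_index_00: "pauli1 p $$ (0,0) = (if snd p then 0 else 1)"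
  by (cases p) (auto simp: pauli1_index split: bool.splits)

lemma pauli1_identity: "pauli1 (False,False) = 1\<^sub>m 2"
  by (rule mat2_eqI) (auto simp: pauli1_index)

lemma pauli1_Z_index: "i < 2 \<Longrightarrow> j < 2 \<Longrightarrow>
  pauli1 (b,False) $$ (i,j) = (if i = j then (if b \<and> i = 1 then -1 else 1) else 0)"
  by (cases b) (auto simp: pauli1_index less_2_cases)

fun label_add :: "plabel \<Rightarrow> plabel \<Rightarrow> plabel" where
  "label_add (p#a) (p'#b) = label1_add p p' # label_add a b"
| "label_add _ _ = []"

fun anticomm :: "plabel \<Rightarrow> plabel \<Rightarrow> bool" where
  "anticomm (p#a) (p'#b) = (anticomm1 p p' \<noteq> anticomm a b)"
| "anticomm _ _ = False"

definition is_zero_label :: "plabel \<Rightarrow> bool" where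
  "is_zero_label a = (\<forall>p\<in>set a. p = (False,False))"

lemma pauli_Nil: "pauli [] = 1\<^sub>m 1"
  by (simp add: pauli_def)

lemma pauli_Cons: "pauli (p#a) = kron (pauli1 p) (pauli a)"
  by (simp add: pauli_def)

lemma pauli_carrier[simp]: "pauli a \<in> carrier_mat (2^length a) (2^length a)"
  by (induction a) (auto simp: pauli_Nil pauli_Cons)

lemma pauli_dims[simp]: "dim_row (pauli a) = 2^length a" "dim_col (pauli a) = 2^length a"
  by (rule carrier_matD[OF pauli_carrier])+

lemma pauli_carrier_length: "length a = n \<Longrightarrow> pauli a \<in> carrier_mat (2^n) (2^n)"
  by auto

lemma pauli_Cons_mult: "length a = length b \<Longrightarrow>
  pauli (p#a) * pauli (p'#b) = kron (pauli1 p * pauli1 p') (pauli a * pauli b)"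
  unfolding pauli_Cons
  by (rule kron_mixed_product[of _ 2 2 _ "2^length a" "2^length a" _ 2 _ "2^length a"]) auto

lemma length_label_add[simp]: "length a = length b \<Longrightarrow> length (label_add a b) = length a"
  by (induction a b rule: label_add.induct) auto

lemma dagger_pauli: "dagger (pauli a) = pauli a"
  by (induction a) (auto simp: pauli_Nil pauli_Cons dagger_kron dagger_pauli1)

lemma pauli_mult: "length a = length b \<Longrightarrow> \<exists>c. pauli a * pauli b = c \<cdot>\<^sub>m pauli (label_add a b)"
proof (induction a b rule: label_add.induct)
  case (1 p a p' b)
  then obtain c where c: "pauli a * pauli b = c \<cdot>\<^sub>m pauli (label_add a b)" by auto
  have "pauli (p#a) * pauli (p'#b) = kron (pauli1 p * pauli1 p') (pauli a * pauli b)"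
    using 1(2) by (simp add: pauli_Cons_mult)
  also have "\<dots> = (pauli1_phase p p' * c) \<cdot>\<^sub>m pauli (label_add (p#a) (p'#b))"
    by (simp add: c pauli1_mult kron_smult_left kron_smult_right pauli_Cons mult.commute)
  finally show ?case by blast
qed (auto intro!: exI[of _ 1] simp: pauli_Nil)

lemma pauli_mult_pauli_mult:
  assumes "length a = n" "length b = n" "length c = n"
  shows "\<exists>k. pauli a * pauli b * pauli c = k \<cdot>\<^sub>m pauli (label_add (label_add a b) c)"
proof -
  obtain k1 where k1: "pauli a * pauli b = k1 \<cdot>\<^sub>m pauli (label_add a b)"
    using pauli_mult assms by metis
  obtain k2 where "pauli (label_add a b) * pauli c = k2 \<cdot>\<^sub>m pauli (label_add (label_add a b) c)"
    using pauli_mult[of "label_add a b" c] assms by auto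
  then show ?thesis using assms by (auto simp: k1 smult_mult_mat)
qed

lemma pauli_squared: "pauli a * pauli a = 1\<^sub>m (2^length a)"
  by (induction a) (simp_all add: pauli_Nil pauli_Cons_mult pauli1_squared kron_one_mat)

lemma pauli_commute:
  "length a = length b \<Longrightarrow> pauli a * pauli b = sign_of (anticomm a b) \<cdot>\<^sub>m (pauli b * pauli a)"
proof (induction a b rule: label_add.induct)
  case (1 p a p' b)
  then have "pauli (p#a) * pauli (p'#b) = kron (pauli1 p * pauli1 p') (pauli a * pauli b)"
    by (simp add: pauli_Cons_mult)
  also have "\<dots> = (sign_of (anticomm1 p p') * sign_of (anticomm a b)) \<cdot>\<^sub>m
                     kron (pauli1 p' * pauli1 p) (pauli b * pauli a)"
    using 1 by (simp add: pauli1_commute[of p] kron_smult_left kron_smult_right mult.commute)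
  also have "kron (pauli1 p' * pauli1 p) (pauli b * pauli a) = pauli (p'#b) * pauli (p#a)"
    using 1(2) by (simp add: pauli_Cons_mult)
  finally show ?case by (simp add: sign_of_mult)
qed (auto simp: sign_of_def pauli_Nil)

lemma mtrace_pauli: "mtrace (pauli a) = (if is_zero_label a then 2^length a else 0)"
  by (induction a) (simp_all add: pauli_Nil pauli_Cons mtrace_kron[OF pauli1_carrier pauli_carrier]
      mtrace_pauli1 is_zero_label_def)

lemma pauli_index_00: "pauli a $$ (0,0) = (if \<forall>p\<in>set a. \<not> snd p then 1 else 0)"
  by (induction a) (simp_all add: pauli_Nil pauli_Cons kron_index_00 pauli1_index_00)

lemma is_zero_label_add: "length a = length b \<Longrightarrow> is_zero_label (label_add a b) \<longleftrightarrow> a = b"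
  by (induction a b rule: label_add.induct) (auto simp: is_zero_label_def label1_add_def prod_eq_iff)

lemma is_zero_label_iff: "is_zero_label a \<longleftrightarrow> a = zero_label (length a)"
  by (induction a) (auto simp: is_zero_label_def zero_label_def)

lemma pauli_zero_label: "pauli (zero_label n) = 1\<^sub>m (2^n)"
  by (induction n) (simp_all add: zero_label_def pauli_Nil pauli_Cons pauli1_identity kron_one_mat)

lemma length_zero_label[simp]: "length (zero_label n) = n"
  by (simp add: zero_label_def)

lemma pauli_neq_zero: "pauli a \<noteq> 0\<^sub>m (2^length a) (2^length a)"
proof
  assume "pauli a = 0\<^sub>m (2^length a) (2^length a)"
  then have "(pauli a * pauli a) $$ (0,0) = 0" by simp
  then show False by (simp add: pauli_squared)
qed

lemma mtrace_pauli_mult: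
  assumes "length a = length b"
  shows "mtrace (pauli a * pauli b) = (if a = b then 2^length a else 0)"
proof (cases "a = b")
  case False
  obtain c where "pauli a * pauli b = c \<cdot>\<^sub>m pauli (label_add a b)" using pauli_mult[OF assms] by auto
  then show ?thesis using False assms by (simp add: mtrace_smult mtrace_pauli is_zero_label_add)
qed (simp add: pauli_squared)

lemma pauli_eq_smult_pauliD:
  assumes "length a = length b" "pauli a = c \<cdot>\<^sub>m pauli b"
  shows "a = b"
proof (rule ccontr)
  assume "a \<noteq> b"
  have "mtrace (pauli a * pauli b) = c * 2^length a"
    using assms by (simp add: smult_mult_mat pauli_squared mtrace_smult)
  then have "c = 0" using \<open>a \<noteq> b\<close> assms(1) by (simp add: mtrace_pauli_mult)
  then show False using assms pauli_neq_zero[of a] by (simp add: zero_smult_mat)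
qed

lemma anticomm_sym: "length a = length b \<Longrightarrow> anticomm a b = anticomm b a"
  by (induction a b rule: label_add.induct) (auto simp: anticomm1_def)

lemma pauli_conj_pauli:
  assumes "length a = length b"
  shows "pauli b * pauli a * pauli b = sign_of (anticomm a b) \<cdot>\<^sub>m pauli a"
proof -
  have "pauli b * pauli a * pauli b = sign_of (anticomm a b) \<cdot>\<^sub>m (pauli a * pauli b * pauli b)"
    using pauli_commute[of b a] assms by (simp add: anticomm_sym smult_mult_mat)
  also have "pauli a * pauli b * pauli b = pauli a"
    using assms by (simp add: assoc_mult_mat_dims pauli_squared)
  finally show ?thesis .
qed


section \<open>The diagonal Paulis \<open>Z\<^sub>z\<close>\<close>

definition z_label :: "bool list \<Rightarrow> plabel" where
  "z_label z = map (\<lambda>b. (b, False)) z"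

text \<open>\<open>zsign z x = (-1)\<^bsup>z\<cdot>x\<^esup>\<close> is the diagonal entry of \<open>Z\<^sub>z\<close> at the basis state \<open>x\<close>, read in binary
  with the first qubit most significant.\<close>

fun zsign :: "bool list \<Rightarrow> nat \<Rightarrow> complex" where
  "zsign [] x = 1"
| "zsign (b#z) x = (if b \<and> x div 2^length z = 1 then -1 else 1) * zsign z (x mod 2^length z)"

lemma length_z_label[simp]: "length (z_label z) = length z"
  by (simp add: z_label_def)

lemma Zop_eq_pauli: "Zop z = pauli (z_label z)"
  by (simp add: Zop_def z_label_def)

lemma Zop_carrier[simp]: "Zop z \<in> carrier_mat (2^length z) (2^length z)"
  using pauli_carrier[of "z_label z"] by (simp add: Zop_eq_pauli)

lemma Zop_dims[simp]: "dim_row (Zop z) = 2^length z" "dim_col (Zop z) = 2^length z"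
  by (rule carrier_matD[OF Zop_carrier])+

lemma is_zero_z_label: "is_zero_label (z_label z) \<longleftrightarrow> z = replicate (length z) False"
  by (induction z) (auto simp: z_label_def is_zero_label_def)

lemma div_mod_eq_iff: "((i::nat) div b = j div b \<and> i mod b = j mod b) \<longleftrightarrow> i = j"
  by (metis div_mult_mod_eq)

lemma Zop_index:
  "x < 2^length z \<Longrightarrow> y < 2^length z \<Longrightarrow> Zop z $$ (x,y) = (if x = y then zsign z x else 0)"
proof (induction z arbitrary: x y)
  case Nil then show ?case by (simp add: Zop_def pauli_Nil)
next
  case (Cons b z)
  let ?m = "2^length z :: nat"
  have "Zop (b#z) = kron (pauli1 (b,False)) (Zop z)"
    by (simp add: Zop_eq_pauli z_label_def pauli_Cons)
  then have "Zop (b#z) $$ (x,y) = pauli1 (b,False) $$ (x div ?m, y div ?m) * Zop z $$ (x mod ?m, y mod ?m)"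
    using Cons.prems by (simp add: kron_index)
  moreover have "x div ?m < 2" "y div ?m < 2"
    using Cons.prems by (auto simp: less_mult_imp_div_less mult.commute)
  ultimately show ?case
    using Cons.IH[of "x mod ?m" "y mod ?m"] div_mod_eq_iff[of x ?m y] by (auto simp: pauli1_Z_index)
qed

lemma finite_lists_length[simp]: "finite {w :: 'a::finite list. length w = n}"
  using finite_lists_length_eq[of "UNIV :: 'a set" n] by simp

lemma card_lists_length: "card {w :: 'a::finite list. length w = n} = CARD('a) ^ n"
  using card_lists_length_eq[of "UNIV :: 'a set" n] by simp

lemma finite_labels[simp]: "finite (labels n)"
  by (simp add: labels_def)

lemma sum_lists_length_Suc:
  "(\<Sum>w\<in>{w :: 'a::finite list. length w = Suc n}. f w) = (\<Sum>b\<in>UNIV. \<Sum>w\<in>{w. length w = n}. f (b#w))"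
proof -
  have "{w :: 'a list. length w = Suc n} = (\<lambda>(b,w). b#w) ` (UNIV \<times> {w. length w = n})"
    by (auto simp: image_iff length_Suc_conv)
  moreover have "inj_on (\<lambda>(b,w). b#w) (UNIV \<times> {w :: 'a list. length w = n})"
    by (auto simp: inj_on_def)
  ultimately show ?thesis
    by (simp add: sum.reindex sum.cartesian_product split_def)
qed

lemma sum_zsign_orthogonal:
  "x < 2^n \<Longrightarrow> y < 2^n \<Longrightarrow> (\<Sum>z\<in>{z. length z = n}. zsign z x * zsign z y) = (if x = y then 2^n else 0)"
proof (induction n arbitrary: x y)
  case (Suc n)
  let ?s = "\<lambda>b x. if b \<and> x div 2^n = 1 then -1 else 1 :: complex"
  have "(\<Sum>z\<in>{z. length z = Suc n}. zsign z x * zsign z y) =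
     (\<Sum>b\<in>UNIV. ?s b x * ?s b y * (\<Sum>z\<in>{z. length z = n}. zsign z (x mod 2^n) * zsign z (y mod 2^n)))"
    by (simp add: sum_lists_length_Suc sum_distrib_left algebra_simps)
  also have "\<dots> = (\<Sum>b\<in>UNIV. ?s b x * ?s b y * (if x mod 2^n = y mod 2^n then 2^n else 0))"
    by (simp add: Suc.IH)
  also have "\<dots> = (if x = y then 2^Suc n else 0)"
  proof -
    have "x div 2^n < 2" "y div 2^n < 2" using Suc.prems by (auto simp: less_mult_imp_div_less mult.commute)
    then show ?thesis using div_mod_eq_iff[of x "2^n" y] by (auto simp: UNIV_bool less_2_cases)
  qed
  finally show ?case .
qed simp

lemma mtrace_Zop_mult:
  assumes "A \<in> carrier_mat (2^length z) (2^length z)"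
  shows "mtrace (Zop z * A) = (\<Sum>x<2^length z. zsign z x * A $$ (x,x))"
proof -
  have "mtrace (Zop z * A) = (\<Sum>x<2^length z. \<Sum>y<2^length z. Zop z $$ (x,y) * A $$ (y,x))"
    using assms by (rule mtrace_mult_entries[OF Zop_carrier])
  also have "\<dots> = (\<Sum>x<2^length z. \<Sum>y<2^length z. if x = y then zsign z x * A $$ (y,x) else 0)"
    by (intro sum.cong refl) (simp add: Zop_index)
  finally show ?thesis by (simp add: sum.delta)
qed

text \<open>Parseval's identity in the orthogonal basis \<open>Z\<^sub>z\<close> of the diagonal matrices.\<close>

lemma sum_mtrace_Zop_products:
  assumes A: "A \<in> carrier_mat (2^n) (2^n)" and B: "B \<in> carrier_mat (2^n) (2^n)"
  shows "(\<Sum>z\<in>{z. length z = n}. mtrace (Zop z * A) * mtrace (Zop z * B)) =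
           2^n * (\<Sum>x<2^n. A $$ (x,x) * B $$ (x,x))"
proof -
  let ?Z = "{z :: bool list. length z = n}"
  have "(\<Sum>z\<in>?Z. mtrace (Zop z * A) * mtrace (Zop z * B)) =
        (\<Sum>z\<in>?Z. \<Sum>x<2^n. \<Sum>y<2^n. (A $$ (x,x) * B $$ (y,y)) * (zsign z x * zsign z y))"
    using A B by (intro sum.cong refl) (simp add: mtrace_Zop_mult sum_product algebra_simps)
  also have "\<dots> = (\<Sum>x<2^n. \<Sum>y<2^n. (A $$ (x,x) * B $$ (y,y)) * (\<Sum>z\<in>?Z. zsign z x * zsign z y))"
    by (subst sum.swap, subst sum.swap[where A = ?Z]) (simp add: sum_distrib_left)
  also have "\<dots> = (\<Sum>x<2^n. 2^n * (A $$ (x,x) * B $$ (x,x)))"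
    by (simp add: sum_zsign_orthogonal if_distrib sum.delta mult.commute cong: if_cong)
  finally show ?thesis by (simp add: sum_distrib_left)
qed

section \<open>Unitaries and Clifford conjugation\<close>

lemma unitary_matD:
  assumes "unitary_mat d U"
  shows "U \<in> carrier_mat d d" "dagger U * U = 1\<^sub>m d" "U * dagger U = 1\<^sub>m d"
  using assms by (auto simp: unitary_mat_def)

lemma unitary_dagger_mult_cancel:
  assumes "unitary_mat d U" "dim_row X = d"
  shows "dagger U * (U * X) = X"
  using unitary_matD[OF assms(1)] assms(2) by (simp add: assoc_mult_mat_dims[symmetric])

lemma unitary_mult_dagger_cancel:
  assumes "unitary_mat d U" "dim_row X = d"
  shows "U * (dagger U * X) = X"
  using unitary_matD[OF assms(1)] assms(2) by (simp add: assoc_mult_mat_dims[symmetric])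

lemma unitary_dagger_conj_conj:
  assumes U: "unitary_mat d U" and P: "P \<in> carrier_mat d d"
  shows "dagger U * (U * P * dagger U) * U = P"
proof -
  have "dagger U * (U * P * dagger U) * U = dagger U * (U * (P * (dagger U * U)))"
    using unitary_matD[OF U] P by (simp add: assoc_mult_mat_dims)
  then show ?thesis using unitary_matD[OF U] P by (simp add: unitary_dagger_mult_cancel[OF U])
qed

lemma unitary_conj_dagger_conj:
  assumes U: "unitary_mat d U" and P: "P \<in> carrier_mat d d"
  shows "U * (dagger U * P * U) * dagger U = P"
proof -
  have "U * (dagger U * P * U) * dagger U = U * (dagger U * (P * (U * dagger U)))"
    using unitary_matD[OF U] P by (simp add: assoc_mult_mat_dims)
  then show ?thesis using unitary_matD[OF U] P by (simp add: unitary_mult_dagger_cancel[OF U])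
qed

lemma unitary_dagger_conj_mult:
  assumes U: "unitary_mat d U" and P: "P \<in> carrier_mat d d" and Q: "Q \<in> carrier_mat d d"
  shows "(dagger U * P * U) * (dagger U * Q * U) = dagger U * (P * Q) * U"
proof -
  have "(dagger U * P * U) * (dagger U * Q * U) = dagger U * (P * (U * (dagger U * (Q * U))))"
    using unitary_matD[OF U] P Q by (simp add: assoc_mult_mat_dims)
  also have "U * (dagger U * (Q * U)) = Q * U"
    using Q by (intro unitary_mult_dagger_cancel[OF U]) simp
  finally show ?thesis using unitary_matD[OF U] P Q by (simp add: assoc_mult_mat_dims)
qed

lemma unitary_dagger_conj_smult:
  assumes "unitary_mat d U" "P \<in> carrier_mat d d"
  shows "dagger U * (c \<cdot>\<^sub>m P) * U = c \<cdot>\<^sub>m (dagger U * P * U)"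
  using unitary_matD[OF assms(1)] assms(2) by (simp add: smult_mult_mat mult_smult_mat)

lemma mtrace_mult_unitary_conj:
  assumes U: "unitary_mat d U" and A: "A \<in> carrier_mat d d" and R: "R \<in> carrier_mat d d"
  shows "mtrace (A * (U * R * dagger U)) = mtrace ((dagger U * A * U) * R)"
proof -
  have "mtrace (A * (U * R * dagger U)) = mtrace ((A * U * R) * dagger U)"
    using unitary_matD[OF U] A R by (simp add: assoc_mult_mat_dims)
  also have "\<dots> = mtrace (dagger U * (A * U * R))"
    using unitary_matD[OF U] A R by (intro mtrace_mult_commute[of _ d d]) auto
  also have "\<dots> = mtrace ((dagger U * A * U) * R)"
    using unitary_matD[OF U] A R by (simp add: assoc_mult_mat_dims)
  finally show ?thesis .
qed

lemma unitary_mult: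
  assumes U: "unitary_mat d U" and V: "unitary_mat d V"
  shows "unitary_mat d (U * V)"
proof -
  note DU = unitary_matD[OF U] and DV = unitary_matD[OF V]
  have dUV: "dagger (U * V) = dagger V * dagger U" using DU DV by (intro dagger_mult) auto
  have "dagger V * (dagger U * (U * V)) = 1\<^sub>m d"
    using DV by (simp add: unitary_dagger_mult_cancel[OF U])
  moreover have "U * (V * (dagger V * dagger U)) = 1\<^sub>m d"
    using DU by (simp add: unitary_mult_dagger_cancel[OF V])
  ultimately show ?thesis
    using DU DV by (simp add: unitary_mat_def dUV assoc_mult_mat_dims)
qed

lemma unitary_eq_smult_unitaryD:
  assumes U: "unitary_mat d U" and V: "unitary_mat d V" and e: "U = c \<cdot>\<^sub>m V" and d: "d > 0"
  shows "cnj c * c = 1"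
proof -
  have "1\<^sub>m d = (cnj c \<cdot>\<^sub>m dagger V) * (c \<cdot>\<^sub>m V)"
    using unitary_matD[OF U] by (simp add: e dagger_smult)
  also have "\<dots> = (cnj c * c) \<cdot>\<^sub>m 1\<^sub>m d"
    using unitary_matD[OF V] by (simp add: smult_mult_mat mult_smult_mat mult.commute)
  finally show ?thesis using smult_one_mat_eq_one_mat_iff[OF d] by metis
qed

lemma clifford_unitary: "clifford n g \<Longrightarrow> unitary_mat (2^n) g"
  by (simp add: clifford_def)

lemma clifford_carrier: "clifford n g \<Longrightarrow> g \<in> carrier_mat (2^n) (2^n)"
  by (simp add: clifford_def unitary_mat_def)

lemma clifford_mult:
  assumes g: "clifford n g" and h: "clifford n h"
  shows "clifford n (g * h)"
  unfolding clifford_def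
proof (intro conjI ballI)
  show U: "unitary_mat (2^n) (g * h)"
    using g h by (simp add: clifford_unitary unitary_mult)
  fix a assume a: "a \<in> labels n"
  obtain t c where t: "t \<in> labels n" and c: "h * pauli a * dagger h = c \<cdot>\<^sub>m pauli t"
    using h a by (auto simp: clifford_def)
  obtain s c' where s: "s \<in> labels n" and c': "g * pauli t * dagger g = c' \<cdot>\<^sub>m pauli s"
    using g t by (auto simp: clifford_def)
  note Dg = unitary_matD[OF clifford_unitary[OF g]] and Dh = unitary_matD[OF clifford_unitary[OF h]]
  have "g * h * pauli a * dagger (g * h) = g * (h * pauli a * dagger h) * dagger g"
    using Dg Dh a by (simp add: dagger_mult[of _ "2^n" "2^n" _ "2^n"] assoc_mult_mat_dims labels_def)
  also have "\<dots> = (c * c') \<cdot>\<^sub>m pauli s"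
    using Dg t by (simp add: c c' smult_mult_mat mult_smult_mat labels_def)
  finally show "\<exists>b\<in>labels n. \<exists>c. g * h * pauli a * dagger (g * h) = c \<cdot>\<^sub>m pauli b"
    using s by blast
qed

lemma clifford_conj_pauli_inverse:
  assumes g: "clifford n g" and a: "length a = n" and b: "length b = n"
    and c: "g * pauli a * dagger g = c \<cdot>\<^sub>m pauli b"
  shows "pauli a = c \<cdot>\<^sub>m (dagger g * pauli b * g)" and "c \<noteq> 0"
proof -
  have U: "unitary_mat (2^n) g" using g by (rule clifford_unitary)
  have "pauli a = dagger g * (g * pauli a * dagger g) * g"
    using unitary_dagger_conj_conj[OF U pauli_carrier_length[OF a]] by simp
  also have "\<dots> = c \<cdot>\<^sub>m (dagger g * pauli b * g)"
    using unitary_dagger_conj_smult[OF U pauli_carrier_length[OF b]] by (simp add: c)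
  finally show *: "pauli a = c \<cdot>\<^sub>m (dagger g * pauli b * g)" .
  show "c \<noteq> 0"
  proof
    assume "c = 0"
    then have "pauli a = 0\<^sub>m (2^n) (2^n)" using * unitary_matD[OF U] by (simp add: zero_smult_mat)
    then show False using pauli_neq_zero[of a] a by simp
  qed
qed

text \<open>Conjugation by a Clifford permutes the Pauli labels (up to phases): it is injective on
  the finite set of labels by linear independence of the Paulis, hence surjective.\<close>

lemma clifford_conj_pauli_surj:
  assumes g: "clifford n g" and b: "length b = n"
  shows "\<exists>a c. length a = n \<and> g * pauli a * dagger g = c \<cdot>\<^sub>m pauli b"
proof -
  let ?L = "labels n"
  have cl: "\<forall>a\<in>?L. \<exists>b\<in>?L. \<exists>c. g * pauli a * dagger g = c \<cdot>\<^sub>m pauli b"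
    using g by (simp add: clifford_def)
  define f where "f a = (SOME b. b \<in> ?L \<and> (\<exists>c. g * pauli a * dagger g = c \<cdot>\<^sub>m pauli b))" for a
  have f: "f a \<in> ?L \<and> (\<exists>c. g * pauli a * dagger g = c \<cdot>\<^sub>m pauli (f a))" if "a \<in> ?L" for a
    unfolding f_def by (rule someI_ex) (use cl that in blast)
  have "inj_on f ?L"
  proof (rule inj_onI)
    fix a a' assume a: "a \<in> ?L" and a': "a' \<in> ?L" and eq: "f a = f a'"
    obtain c c' where c: "g * pauli a * dagger g = c \<cdot>\<^sub>m pauli (f a)"
      and c': "g * pauli a' * dagger g = c' \<cdot>\<^sub>m pauli (f a)" using f[OF a] f[OF a'] eq by auto
    have l: "length a = n" "length a' = n" "length (f a) = n" using a a' f[OF a] by (auto simp: labels_def)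
    note inv = clifford_conj_pauli_inverse[OF g l(1,3) c] clifford_conj_pauli_inverse[OF g l(2,3) c']
    then have "pauli a = (c / c') \<cdot>\<^sub>m pauli a'" by simp
    then show "a = a'" using pauli_eq_smult_pauliD l by metis
  qed
  then have "f ` ?L = ?L" using f by (intro endo_inj_surj) auto
  moreover have "b \<in> ?L" using b by (simp add: labels_def)
  ultimately have "b \<in> f ` ?L" by simp
  then obtain a where "a \<in> ?L" "f a = b" by blast
  then show ?thesis using f[of a] by (auto simp: labels_def)
qed

lemma clifford_dagger_conj_pauli:
  assumes g: "clifford n g" and b: "length b = n"
  shows "\<exists>a e. length a = n \<and> (e = 1 \<or> e = -1) \<and> dagger g * pauli b * g = e \<cdot>\<^sub>m pauli a"
proof -
  have U: "unitary_mat (2^n) g" using g by (rule clifford_unitary)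
  obtain a c where a: "length a = n" and c: "g * pauli a * dagger g = c \<cdot>\<^sub>m pauli b"
    using clifford_conj_pauli_surj[OF g b] by blast
  note inv = clifford_conj_pauli_inverse[OF g a b c]
  then have M: "dagger g * pauli b * g = (1/c) \<cdot>\<^sub>m pauli a" by simp
  have "(dagger g * pauli b * g) * (dagger g * pauli b * g) = 1\<^sub>m (2^n)"
    using unitary_dagger_conj_mult[OF U pauli_carrier_length[OF b] pauli_carrier_length[OF b]]
      unitary_matD[OF U] b by (simp add: pauli_squared)
  then have "((1/c) * (1/c)) \<cdot>\<^sub>m 1\<^sub>m (2^n) = 1\<^sub>m (2^n)"
    using M a by (simp add: smult_mult_mat mult_smult_mat pauli_squared)
  then have "(1/c)\<^sup>2 = 1" by (simp add: smult_one_mat_eq_one_mat_iff power2_eq_square)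
  then have "1/c = 1 \<or> 1/c = -1" by (simp add: power2_eq_1_iff)
  then show ?thesis using M a by (intro exI[of _ a] exI[of _ "1/c"]) simp
qed

lemma Xi_eqI:
  assumes "length a = n" "e = 1 \<or> e = -1" "dagger g * Zop z * g = e \<cdot>\<^sub>m pauli a"
  shows "Xi n z g = a"
  unfolding Xi_def
proof (rule the_equality)
  show "a \<in> labels n \<and> (dagger g * Zop z * g = pauli a \<or> dagger g * Zop z * g = - pauli a)"
    using assms by (auto simp: labels_def uminus_eq_smult_mat)
next
  fix b assume b: "b \<in> labels n \<and> (dagger g * Zop z * g = pauli b \<or> dagger g * Zop z * g = - pauli b)"
  from b have "pauli b = e \<cdot>\<^sub>m pauli a \<or> pauli b = (- e) \<cdot>\<^sub>m pauli a"
  proof (elim conjE disjE)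
    assume "dagger g * Zop z * g = - pauli b"
    then have "pauli b = - (e \<cdot>\<^sub>m pauli a)" using assms(3) by simp
    then show ?thesis by (simp add: uminus_eq_smult_mat[of "e \<cdot>\<^sub>m pauli a"])
  qed (use assms(3) in simp)
  then show "b = a" using pauli_eq_smult_pauliD b assms(1) by (auto simp: labels_def)
qed

lemma Xi_conj_Zop:
  assumes g: "clifford n g" and z: "length z = n"
  shows "length (Xi n z g) = n" "\<exists>e. (e = 1 \<or> e = -1) \<and> dagger g * Zop z * g = e \<cdot>\<^sub>m pauli (Xi n z g)"
proof -
  obtain a e where "length a = n" "e = 1 \<or> e = -1" "dagger g * Zop z * g = e \<cdot>\<^sub>m pauli a"
    using clifford_dagger_conj_pauli[OF g, of "z_label z"] z by (auto simp: Zop_eq_pauli)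
  moreover from this have "Xi n z g = a" by (rule Xi_eqI)
  ultimately show "length (Xi n z g) = n" "\<exists>e. (e = 1 \<or> e = -1) \<and> dagger g * Zop z * g = e \<cdot>\<^sub>m pauli (Xi n z g)"
    by auto
qed

lemma Xi_eq_zero_label_iff:
  assumes g: "clifford n g" and z: "length z = n"
  shows "Xi n z g = zero_label n \<longleftrightarrow> z = replicate n False"
proof -
  have U: "unitary_mat (2^n) g" using g by (rule clifford_unitary)
  obtain e where e: "e = 1 \<or> e = -1" "dagger g * Zop z * g = e \<cdot>\<^sub>m pauli (Xi n z g)"
    using Xi_conj_Zop[OF g z] by auto
  have "Zop z = g * (dagger g * Zop z * g) * dagger g"
    using unitary_conj_dagger_conj[OF U Zop_carrier[of z, unfolded z]] by simp
  also have "\<dots> = e \<cdot>\<^sub>m (g * pauli (Xi n z g) * dagger g)"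
    using unitary_matD[OF U] Xi_conj_Zop(1)[OF g z] by (simp add: e smult_mult_mat mult_smult_mat)
  finally have Z: "Zop z = e \<cdot>\<^sub>m (g * pauli (Xi n z g) * dagger g)" .
  show ?thesis
  proof
    assume "Xi n z g = zero_label n"
    then have "pauli (z_label z) = e \<cdot>\<^sub>m pauli (zero_label n)"
      using Z unitary_matD[OF U] by (simp add: Zop_eq_pauli pauli_zero_label)
    then have "z_label z = zero_label n" using z by (intro pauli_eq_smult_pauliD) auto
    then show "z = replicate n False" using is_zero_z_label[of z] z by (simp add: is_zero_label_iff)
  next
    assume "z = replicate n False"
    then have "Zop z = 1\<^sub>m (2^n)"
      using is_zero_z_label[of z] z by (simp add: Zop_eq_pauli is_zero_label_iff pauli_zero_label)
    then have "pauli (zero_label n) = e \<cdot>\<^sub>m pauli (Xi n z g)"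
      using e unitary_matD[OF U] by (simp add: pauli_zero_label)
    then show "Xi n z g = zero_label n"
      using Xi_conj_Zop(1)[OF g z] by (intro pauli_eq_smult_pauliD[symmetric]) auto
  qed
qed

section \<open>A Clifford exchanging two anticommuting Paulis\<close>

definition swap_clifford :: "plabel \<Rightarrow> plabel \<Rightarrow> complex mat" where
  "swap_clifford a b = complex_of_real (1 / sqrt 2) \<cdot>\<^sub>m (pauli a + pauli b)"

lemma sandwich_smult_add:
  fixes A B R :: "complex mat"
  assumes "A \<in> carrier_mat d d" "B \<in> carrier_mat d d" "R \<in> carrier_mat d d"
  shows "(k \<cdot>\<^sub>m (A + B)) * R * (k \<cdot>\<^sub>m (A + B)) =
           (k * k) \<cdot>\<^sub>m (A * R * A + A * R * B + (B * R * A + B * R * B))"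
proof -
  have "(A + B) * R * (A + B) = (A * R + B * R) * (A + B)"
    using assms by (simp add: add_mult_distrib_mat[of _ d d])
  also have "\<dots> = A * R * (A + B) + B * R * (A + B)"
    using assms by (intro add_mult_distrib_mat[of _ d d]) auto
  also have "\<dots> = A * R * A + A * R * B + (B * R * A + B * R * B)"
    using assms by (simp add: mult_add_distrib_mat[of _ d d])
  finally have "(A + B) * R * (A + B) = \<dots>" .
  moreover have "(k \<cdot>\<^sub>m (A + B)) * R * (k \<cdot>\<^sub>m (A + B)) = (k * k) \<cdot>\<^sub>m ((A + B) * R * (A + B))"
    using assms by (simp add: smult_mult_mat mult_smult_mat)
  ultimately show ?thesis by simp
qed

lemma inv_sqrt2_squared: "complex_of_real (1 / sqrt 2) * complex_of_real (1 / sqrt 2) = 1/2"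
  by (simp flip: of_real_mult)

lemma swap_clifford_carrier:
  "length a = n \<Longrightarrow> length b = n \<Longrightarrow> swap_clifford a b \<in> carrier_mat (2^n) (2^n)"
  by (auto simp: swap_clifford_def)

lemma dagger_swap_clifford:
  assumes "length a = length b"
  shows "dagger (swap_clifford a b) = swap_clifford a b"
proof -
  have "dagger (pauli a + pauli b) = pauli a + pauli b"
    using assms by (subst dagger_add[of _ "2^length a" "2^length a"]) (auto simp: dagger_pauli)
  then show ?thesis by (simp add: swap_clifford_def dagger_smult)
qed

lemma swap_clifford_sandwich:
  assumes "length a = n" "length b = n" "R \<in> carrier_mat (2^n) (2^n)"
  shows "swap_clifford a b * R * swap_clifford a b =
           (1/2) \<cdot>\<^sub>m (pauli a * R * pauli a + pauli a * R * pauli b + (pauli b * R * pauli a + pauli b * R * pauli b))"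
  unfolding swap_clifford_def inv_sqrt2_squared[symmetric] using assms by (intro sandwich_smult_add) auto

lemma swap_clifford_squared:
  assumes l: "length a = n" "length b = n" and ab: "anticomm a b"
  shows "swap_clifford a b * swap_clifford a b = 1\<^sub>m (2^n)"
proof -
  have "swap_clifford a b * swap_clifford a b = swap_clifford a b * 1\<^sub>m (2^n) * swap_clifford a b"
    using swap_clifford_carrier[OF l] by simp
  also have "\<dots> = (1/2) \<cdot>\<^sub>m (1\<^sub>m (2^n) + pauli a * pauli b + ((-1) \<cdot>\<^sub>m (pauli a * pauli b) + 1\<^sub>m (2^n)))"
    using l ab pauli_commute[of b a] by (simp add: swap_clifford_sandwich pauli_squared anticomm_sym sign_of_def)
  also have "\<dots> = 1\<^sub>m (2^n)"
    using l by (intro eq_matI) auto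
  finally show ?thesis .
qed

lemma swap_clifford_conj:
  assumes l: "length a = n" "length b = n" and ab: "anticomm a b"
  shows "swap_clifford a b * pauli a * swap_clifford a b = pauli b"
proof -
  have "swap_clifford a b * pauli a * swap_clifford a b = (1/2) \<cdot>\<^sub>m
      (pauli a * pauli a * pauli a + pauli a * pauli a * pauli b + (pauli b * pauli a * pauli a + pauli b * pauli a * pauli b))"
    by (rule swap_clifford_sandwich[OF l pauli_carrier_length[OF l(1)]])
  also have "\<dots> = (1/2) \<cdot>\<^sub>m (pauli a + pauli b + (pauli b + (-1) \<cdot>\<^sub>m pauli a))"
    using l ab pauli_conj_pauli[of a b] by (simp add: pauli_squared assoc_mult_mat_dims sign_of_def)
  also have "\<dots> = pauli b"
    using l by (intro eq_matI) auto
  finally show ?thesis .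
qed

text \<open>Each of the four terms of the sandwich is \<open>\<plusminus>\<sigma>\<^sub>r\<close> or \<open>\<plusminus>\<sigma>\<^sub>r\<sigma>\<^sub>a\<sigma>\<^sub>b\<close>; depending on whether \<open>\<sigma>\<^sub>r\<close>
  anticommutes with \<open>\<sigma>\<^sub>a\<close> and \<open>\<sigma>\<^sub>b\<close> equally or not, one of the two pairs cancels.\<close>

lemma swap_clifford_conj_pauli:
  assumes l: "length a = n" "length b = n" "length r = n" and ab: "anticomm a b"
  shows "\<exists>t c. length t = n \<and> swap_clifford a b * pauli r * dagger (swap_clifford a b) = c \<cdot>\<^sub>m pauli t"
proof -
  let ?A = "pauli a" and ?B = "pauli b" and ?R = "pauli r"
  define x where "x = sign_of (anticomm r a)"
  define y where "y = sign_of (anticomm r b)"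
  define t where "t = label_add (label_add r a) b"
  have lt: "length t = n" using l by (simp add: t_def)
  obtain c where RAB: "?R * ?A * ?B = c \<cdot>\<^sub>m pauli t"
    using pauli_mult_pauli_mult[OF l(3,1,2)] unfolding t_def ..
  have "?B * ?R * ?A = y \<cdot>\<^sub>m (?R * (?B * ?A))"
    using pauli_commute[of b r] l by (simp add: y_def anticomm_sym smult_mult_mat assoc_mult_mat_dims)
  also have "?B * ?A = (-1) \<cdot>\<^sub>m (?A * ?B)"
    using pauli_commute[of b a] l ab by (simp add: anticomm_sym sign_of_def)
  finally have BRA: "?B * ?R * ?A = (- y) \<cdot>\<^sub>m (?R * ?A * ?B)"
    using l by (simp add: mult_smult_mat assoc_mult_mat_dims)
  have ARA: "?A * ?R * ?A = x \<cdot>\<^sub>m ?R" and BRB: "?B * ?R * ?B = y \<cdot>\<^sub>m ?R"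
    using pauli_conj_pauli[of r a] pauli_conj_pauli[of r b] l by (simp_all add: x_def y_def)
  have ARB: "?A * ?R * ?B = x \<cdot>\<^sub>m (?R * ?A * ?B)"
    using pauli_commute[of a r] l by (simp add: x_def anticomm_sym smult_mult_mat)
  have "swap_clifford a b * ?R * dagger (swap_clifford a b) =
      (1/2) \<cdot>\<^sub>m (x \<cdot>\<^sub>m ?R + x \<cdot>\<^sub>m (?R * ?A * ?B) + ((- y) \<cdot>\<^sub>m (?R * ?A * ?B) + y \<cdot>\<^sub>m ?R))"
    unfolding dagger_swap_clifford[of a b, OF l(1)[folded l(2)]] ARA[symmetric] ARB[symmetric]
      BRA[symmetric] BRB[symmetric]
    by (rule swap_clifford_sandwich[OF l(1,2) pauli_carrier_length[OF l(3)]])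
  also have "\<dots> = (1/2) \<cdot>\<^sub>m (x \<cdot>\<^sub>m ?R + (x * c) \<cdot>\<^sub>m pauli t + ((- y * c) \<cdot>\<^sub>m pauli t + y \<cdot>\<^sub>m ?R))"
    by (simp add: RAB)
  finally have M: "swap_clifford a b * ?R * dagger (swap_clifford a b) = \<dots>" .
  show ?thesis
  proof (cases "x = y")
    case True
    then have "swap_clifford a b * ?R * dagger (swap_clifford a b) = x \<cdot>\<^sub>m ?R"
      unfolding M using l lt by (intro eq_matI) (auto simp: algebra_simps)
    then show ?thesis using l by blast
  next
    case False
    then have "y = - x" by (auto simp: x_def y_def sign_of_def split: if_splits)
    then have "swap_clifford a b * ?R * dagger (swap_clifford a b) = (x * c) \<cdot>\<^sub>m pauli t"
      unfolding M using l lt by (intro eq_matI) (auto simp: algebra_simps)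
    then show ?thesis using lt by blast
  qed
qed

lemma clifford_swap_clifford:
  assumes l: "length a = n" "length b = n" and ab: "anticomm a b"
  shows "clifford n (swap_clifford a b)"
  using swap_clifford_carrier[OF l] dagger_swap_clifford[of a b] swap_clifford_squared[OF l ab]
    swap_clifford_conj_pauli[OF l _ ab] l
  by (auto simp: clifford_def unitary_mat_def labels_def)

section \<open>Counting the fibres of \<open>\<Xi>\<close>\<close>

definition transversal_rep :: "complex mat set \<Rightarrow> complex mat \<Rightarrow> complex mat" where
  "transversal_rep G U = (THE g. g \<in> G \<and> (\<exists>c. U = c \<cdot>\<^sub>m g))"

lemma transversal_rep:
  assumes "clifford_transversal n G" "clifford n U"
  shows "transversal_rep G U \<in> G \<and> (\<exists>c. U = c \<cdot>\<^sub>m transversal_rep G U)"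
  unfolding transversal_rep_def
  by (rule theI') (use assms in \<open>auto simp: clifford_transversal_def\<close>)

lemma transversal_clifford: "clifford_transversal n G \<Longrightarrow> g \<in> G \<Longrightarrow> clifford n g"
  by (simp add: clifford_transversal_def)

lemma transversal_eq_smultD:
  assumes T: "clifford_transversal n G" and "g1 \<in> G" "g2 \<in> G" "g1 = c \<cdot>\<^sub>m g2"
  shows "g1 = g2"
proof -
  have "\<exists>!g. g \<in> G \<and> (\<exists>c. g1 = c \<cdot>\<^sub>m g)"
    using T transversal_clifford[OF T \<open>g1 \<in> G\<close>] by (auto simp: clifford_transversal_def)
  moreover have "g1 = 1 \<cdot>\<^sub>m g1" by simp
  ultimately show ?thesis using assms(2-) by blast
qed

lemma transversal_rep_mult:
  assumes T: "clifford_transversal n G" and g: "g \<in> G" and h: "clifford n h"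
  obtains c where "transversal_rep G (g * h) \<in> G" "g * h = c \<cdot>\<^sub>m transversal_rep G (g * h)" "cnj c * c = 1"
proof -
  have gh: "clifford n (g * h)" using clifford_mult[OF transversal_clifford[OF T g] h] .
  obtain c where r: "transversal_rep G (g * h) \<in> G" and c: "g * h = c \<cdot>\<^sub>m transversal_rep G (g * h)"
    using transversal_rep[OF T gh] by blast
  have "cnj c * c = 1"
    using clifford_unitary[OF gh] clifford_unitary[OF transversal_clifford[OF T r]] c
    by (rule unitary_eq_smult_unitaryD) simp
  with r c that show ?thesis by blast
qed

lemma inj_on_transversal_rep_mult:
  assumes T: "clifford_transversal n G" and h: "clifford n h" and hh: "h * h = 1\<^sub>m (2^n)"
  shows "inj_on (\<lambda>g. transversal_rep G (g * h)) G"
proof (rule inj_onI)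
  fix g1 g2 assume g1: "g1 \<in> G" and g2: "g2 \<in> G"
    and eq: "transversal_rep G (g1 * h) = transversal_rep G (g2 * h)"
  define g' where "g' = transversal_rep G (g1 * h)"
  obtain c1 where "g' \<in> G" and c1: "g1 * h = c1 \<cdot>\<^sub>m g'"
    using transversal_rep_mult[OF T g1 h] unfolding g'_def .
  obtain c2 where c2: "g2 * h = c2 \<cdot>\<^sub>m g'" "cnj c2 * c2 = 1"
    using transversal_rep_mult[OF T g2 h] unfolding g'_def eq .
  have dims: "dim_col g' = dim_row h"
    using clifford_carrier[OF transversal_clifford[OF T \<open>g' \<in> G\<close>]] clifford_carrier[OF h] by simp
  have cancel_h: "g = (c \<cdot>\<^sub>m g') * h" if "g \<in> G" "g * h = c \<cdot>\<^sub>m g'" for g c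
  proof -
    have "g = g * h * h"
      using clifford_carrier[OF transversal_clifford[OF T \<open>g \<in> G\<close>]] clifford_carrier[OF h]
      by (simp add: assoc_mult_mat_dims hh)
    then show ?thesis by (simp add: that(2))
  qed
  have "g1 = c1 \<cdot>\<^sub>m (g' * h)" "g2 = c2 \<cdot>\<^sub>m (g' * h)"
    using cancel_h[OF g1 c1] cancel_h[OF g2 c2(1)] dims by (simp_all add: smult_mult_mat)
  moreover have "c2 \<noteq> 0" using c2(2) by auto
  ultimately have "g1 = (c1 / c2) \<cdot>\<^sub>m g2" by simp
  then show "g1 = g2" by (rule transversal_eq_smultD[OF T g1 g2])
qed

lemma Xi_transversal_rep_mult:
  assumes T: "clifford_transversal n G" and g: "g \<in> G" and z: "length z = n"
    and h: "clifford n h" and b: "length b = n" and hb: "dagger h * pauli (Xi n z g) * h = pauli b"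
  shows "Xi n z (transversal_rep G (g * h)) = b"
proof -
  define g' where "g' = transversal_rep G (g * h)"
  obtain c where c: "g * h = c \<cdot>\<^sub>m g'" "cnj c * c = 1"
    using transversal_rep_mult[OF T g h] unfolding g'_def by blast
  obtain e where e: "e = 1 \<or> e = -1" "dagger g * Zop z * g = e \<cdot>\<^sub>m pauli (Xi n z g)"
    using Xi_conj_Zop(2)[OF transversal_clifford[OF T g] z] by blast
  note Dg = unitary_matD[OF clifford_unitary[OF transversal_clifford[OF T g]]]
    and Dh = unitary_matD[OF clifford_unitary[OF h]]
  have g': "g' = cnj c \<cdot>\<^sub>m (g * h)" using c by (simp add: mult.assoc[symmetric])
  have "dagger g' * Zop z * g' = (cnj c * c) \<cdot>\<^sub>m (dagger h * (dagger g * Zop z * g) * h)"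
    using Dg Dh z by (simp add: g' dagger_smult dagger_mult[of _ "2^n" "2^n" _ "2^n"]
        smult_mult_mat mult_smult_mat assoc_mult_mat_dims)
  also have "\<dots> = e \<cdot>\<^sub>m pauli b"
    using c(2) Dh Xi_conj_Zop(1)[OF transversal_clifford[OF T g] z]
    by (simp add: e smult_mult_mat mult_smult_mat hb)
  finally show ?thesis unfolding g'_def using Xi_eqI[OF b e(1)] by blast
qed

text \<open>\<open>card (Xi_fibre n G a) / card G\<close> is the weight \<open>s\<^sub>a\<close> of the uniform distribution.\<close>

definition Xi_fibre :: "nat \<Rightarrow> complex mat set \<Rightarrow> plabel \<Rightarrow> (bool list \<times> complex mat) set" where
  "Xi_fibre n G a = (SIGMA z:{z. length z = n}. {g\<in>G. Xi n z g = a})"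

lemma card_Xi_fibre:
  "finite G \<Longrightarrow> card (Xi_fibre n G a) = (\<Sum>z\<in>{z. length z = n}. card {g\<in>G. Xi n z g = a})"
  unfolding Xi_fibre_def by (rule card_SigmaI) simp_all

text \<open>Right multiplication by the swap Clifford of \<open>a\<close> and \<open>b\<close> injects the fibre over \<open>a\<close> into the
  fibre over \<open>b\<close>.\<close>

lemma card_Xi_fibre_le:
  assumes T: "clifford_transversal n G" and fin: "finite G"
    and l: "length a = n" "length b = n" and ab: "anticomm a b"
  shows "card (Xi_fibre n G a) \<le> card (Xi_fibre n G b)"
proof -
  let ?h = "swap_clifford a b"
  let ?f = "\<lambda>(z, g). (z, transversal_rep G (g * ?h))"
  have h: "clifford n ?h" by (rule clifford_swap_clifford[OF l ab])
  have inj: "inj_on (\<lambda>g. transversal_rep G (g * ?h)) G"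
    using inj_on_transversal_rep_mult[OF T h swap_clifford_squared[OF l ab]] .
  have "inj_on ?f (Xi_fibre n G a)"
    using inj by (auto simp: Xi_fibre_def inj_on_def)
  moreover have "?f ` Xi_fibre n G a \<subseteq> Xi_fibre n G b"
  proof clarify
    fix z g assume "(z, g) \<in> Xi_fibre n G a"
    then have g: "g \<in> G" and z: "length z = n" and Xa: "Xi n z g = a" by (auto simp: Xi_fibre_def)
    have "dagger ?h * pauli (Xi n z g) * ?h = pauli b"
      using l Xa by (simp add: dagger_swap_clifford swap_clifford_conj[OF l ab])
    then have "Xi n z (transversal_rep G (g * ?h)) = b"
      by (rule Xi_transversal_rep_mult[OF T g z h l(2)])
    then show "(z, transversal_rep G (g * ?h)) \<in> Xi_fibre n G b"
      using transversal_rep_mult[OF T g h] z by (auto simp: Xi_fibre_def)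
  qed
  moreover have "finite (Xi_fibre n G b)"
    using fin by (auto simp: Xi_fibre_def)
  ultimately show ?thesis by (rule card_inj_on_le)
qed

lemma anticomm1_zero[simp]: "\<not> anticomm1 p (False,False)" "\<not> anticomm1 (False,False) p"
  by (auto simp: anticomm1_def)

lemma anticomm_zero_label: "length a = n \<Longrightarrow> \<not> anticomm a (zero_label n)"
  by (induction a arbitrary: n) (auto simp: zero_label_def anticomm1_def)

lemma anticomm_update_zero_label:
  "length a = n \<Longrightarrow> k < n \<Longrightarrow> anticomm a ((zero_label n)[k := u]) = anticomm1 (a!k) u"
proof (induction a arbitrary: n k)
  case (Cons p a)
  then obtain m where n: "n = Suc m" and l: "length a = m" by auto
  have "zero_label n = (False, False) # zero_label m" by (simp add: n zero_label_def)
  with Cons l show ?case by (cases k) (auto simp: anticomm_zero_label)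
qed simp

lemma anticomm_label_add:
  "length a = length r1 \<Longrightarrow> length r1 = length r2 \<Longrightarrow>
   anticomm a (label_add r1 r2) = (anticomm a r1 \<noteq> anticomm a r2)"
proof (induction r1 r2 arbitrary: a rule: label_add.induct)
  case (1 p r1 p' r2)
  then obtain q a' where "a = q # a'" by (cases a) auto
  with 1 show ?case
    by (cases q; cases p; cases p') (auto simp: anticomm1_def label1_add_def)
qed auto

lemma anticomm1_common:
  assumes "p \<noteq> (False,False)" "q \<noteq> (False,False)"
  shows "\<exists>u. anticomm1 p u \<and> anticomm1 q u"
proof -
  have "\<exists>u\<in>{(False,True),(True,False),(True,True)}. anticomm1 p u \<and> anticomm1 q u"
    using assms by (cases p; cases q) (simp add: anticomm1_def; argo)
  then show ?thesis by blast
qed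

lemma exists_anticomm_both:
  assumes la: "length a = n" and lb: "length b = n"
    and a: "a \<noteq> zero_label n" and b: "b \<noteq> zero_label n"
  shows "\<exists>r. length r = n \<and> anticomm a r \<and> anticomm b r"
proof -
  obtain i where i: "i < n" "a!i \<noteq> (False,False)"
    using a la by (auto simp: zero_label_def list_eq_iff_nth_eq)
  obtain j where j: "j < n" "b!j \<noteq> (False,False)"
    using b lb by (auto simp: zero_label_def list_eq_iff_nth_eq)
  show ?thesis
  proof (cases "b!i = (False,False) \<and> a!j = (False,False)")
    case True
    obtain u v where u: "anticomm1 (a!i) u" and v: "anticomm1 (b!j) v"
      using anticomm1_common[OF i(2) i(2)] anticomm1_common[OF j(2) j(2)] by blast
    define r where "r = label_add ((zero_label n)[i := u]) ((zero_label n)[j := v])"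
    have "anticomm a r" "anticomm b r"
      using la lb i j u v True by (simp_all add: r_def anticomm_label_add anticomm_update_zero_label)
    then show ?thesis by (intro exI[of _ r]) (simp add: r_def)
  next
    case False
    then obtain k where k: "k < n" "a!k \<noteq> (False,False)" "b!k \<noteq> (False,False)" using i j by blast
    obtain u where "anticomm1 (a!k) u" "anticomm1 (b!k) u" using anticomm1_common[OF k(2,3)] by blast
    then show ?thesis
      using la lb k by (intro exI[of _ "(zero_label n)[k := u]"]) (simp add: anticomm_update_zero_label)
  qed
qed

lemma card_Xi_fibre_eq:
  assumes T: "clifford_transversal n G" and fin: "finite G"
    and l: "length a = n" "length b = n" and nz: "a \<noteq> zero_label n" "b \<noteq> zero_label n"
  shows "card (Xi_fibre n G a) = card (Xi_fibre n G b)"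
proof -
  have le: "card (Xi_fibre n G a) \<le> card (Xi_fibre n G b)"
    if ab: "length a = n" "length b = n" "a \<noteq> zero_label n" "b \<noteq> zero_label n" for a b
  proof -
    obtain r where r: "length r = n" "anticomm a r" "anticomm b r"
      using exists_anticomm_both[OF ab] by blast
    have "anticomm r b" using r ab(2) anticomm_sym[of r b] by simp
    have "card (Xi_fibre n G a) \<le> card (Xi_fibre n G r)"
      by (rule card_Xi_fibre_le[OF T fin ab(1) r(1,2)])
    also have "\<dots> \<le> card (Xi_fibre n G b)"
      by (rule card_Xi_fibre_le[OF T fin r(1) ab(2) \<open>anticomm r b\<close>])
    finally show ?thesis .
  qed
  show ?thesis using le[OF l nz] le[OF l(2,1) nz(2,1)] by simp
qed

lemma sum_card_Xi_fibre:
  assumes T: "clifford_transversal n G" and fin: "finite G"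
  shows "(\<Sum>a\<in>labels n. card (Xi_fibre n G a)) = 2^n * card G"
proof -
  have "(\<Sum>a\<in>labels n. card {g\<in>G. Xi n z g = a}) = card G" if z: "length z = n" for z
  proof -
    have "(\<Sum>a\<in>labels n. card {g\<in>G. Xi n z g = a}) = (\<Sum>a\<in>labels n. \<Sum>g\<in>G. if Xi n z g = a then 1 else 0)"
      using fin by (simp add: sum.inter_filter[symmetric])
    also have "\<dots> = (\<Sum>g\<in>G. \<Sum>a\<in>labels n. if Xi n z g = a then 1 else 0)"
      by (rule sum.swap)
    also have "\<dots> = (\<Sum>g\<in>G. 1)"
      using Xi_conj_Zop(1)[OF transversal_clifford[OF T] z] by (intro sum.cong) (auto simp: labels_def)
    finally show ?thesis by simp
  qed
  then have "(\<Sum>z\<in>{z. length z = n}. \<Sum>a\<in>labels n. card {g\<in>G. Xi n z g = a}) =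
             (\<Sum>z\<in>{z :: bool list. length z = n}. card G)"
    by (intro sum.cong) auto
  moreover have "(\<Sum>a\<in>labels n. card (Xi_fibre n G a)) =
      (\<Sum>z\<in>{z. length z = n}. \<Sum>a\<in>labels n. card {g\<in>G. Xi n z g = a})"
    unfolding card_Xi_fibre[OF fin] by (rule sum.swap)
  ultimately show ?thesis by (simp add: card_lists_length)
qed

lemma card_Xi_fibre_zero_label:
  assumes T: "clifford_transversal n G" and fin: "finite G"
  shows "card (Xi_fibre n G (zero_label n)) = card G"
proof -
  have "card {g\<in>G. Xi n z g = zero_label n} = (if z = replicate n False then card G else 0)"
    if "length z = n" for z
  proof -
    have "{g\<in>G. Xi n z g = zero_label n} = (if z = replicate n False then G else {})"
      using Xi_eq_zero_label_iff[OF transversal_clifford[OF T] that] by auto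
    then show ?thesis by simp
  qed
  then have "card (Xi_fibre n G (zero_label n)) =
             (\<Sum>z\<in>{z. length z = n}. if z = replicate n False then card G else 0)"
    unfolding card_Xi_fibre[OF fin] by (intro sum.cong) auto
  then show ?thesis by (simp add: sum.delta')
qed

lemma card_Xi_fibre_nonzero:
  assumes T: "clifford_transversal n G" and fin: "finite G" and n: "n \<ge> 1"
    and l: "length a = n" and nz: "a \<noteq> zero_label n"
  shows "(2^n + 1) * card (Xi_fibre n G a) = card G"
proof -
  let ?L = "labels n" and ?N = "card (Xi_fibre n G a)"
  have z: "zero_label n \<in> ?L" by (simp add: labels_def)
  have "(\<Sum>b\<in>?L - {zero_label n}. card (Xi_fibre n G b)) = (\<Sum>b\<in>?L - {zero_label n}. ?N)"
    using card_Xi_fibre_eq[OF T fin _ l _ nz] by (intro sum.cong) (auto simp: labels_def)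
  also have "\<dots> = (4^n - 1) * ?N"
    using z card_lists_length[where 'a = "bool \<times> bool" and n = n] by (simp add: labels_def)
  finally have "2^n * card G = card G + (4^n - 1) * ?N"
    using sum_card_Xi_fibre[OF T fin] sum.remove[OF finite_labels z, of "\<lambda>b. card (Xi_fibre n G b)"]
      card_Xi_fibre_zero_label[OF T fin] by simp
  then have "(2^n - 1) * card G = (4^n - 1) * ?N"
    by (simp add: diff_mult_distrib)
  also have "(4::nat)^n - 1 = (2^n - 1) * (2^n + 1)"
  proof -
    have "(x - 1) * (x + 1) = x * x - (1::nat)" for x by (cases x) auto
    then show ?thesis by (simp flip: power_mult_distrib)
  qed
  finally have "(2^n - 1) * card G = (2^n - 1) * ((2^n + 1) * ?N)"
    by (simp only: mult.assoc)
  moreover have "(2::nat)^n - 1 \<noteq> 0"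
  proof -
    have "(2::nat)^1 \<le> 2^n" using n by (intro power_increasing) auto
    then show ?thesis by simp
  qed
  ultimately show ?thesis by simp
qed

lemma s_weight_nonzero_diag:
  assumes T: "clifford_transversal n G" and fin: "finite G" and n: "n \<ge> 1" and G: "G \<noteq> {}"
    and a: "a \<in> diag_labels n - {zero_label n}"
  shows "s_weight n G a = 1 / (of_nat (2^n) + 1)"
proof -
  have N: "(2^n + 1) * card (Xi_fibre n G a) = card G"
    using a by (intro card_Xi_fibre_nonzero[OF T fin n]) (auto simp: diag_labels_def)
  have "card (Xi_fibre n G a) \<noteq> 0" using N G fin by auto
  moreover have "of_nat (card G) = (of_nat (2^n) + 1) * (of_nat (card (Xi_fibre n G a)) :: complex)"
    by (simp flip: N add: algebra_simps)
  moreover have "s_weight n G a = of_nat (card (Xi_fibre n G a)) / of_nat (card G)"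
    using fin by (simp add: s_weight_def card_Xi_fibre sum_divide_distrib)
  ultimately show ?thesis by simp
qed

section \<open>Pauli channels\<close>

lemma pauli_channel_carrier[simp]: "pauli_channel n q \<rho> \<in> carrier_mat (2^n) (2^n)"
  by (simp add: pauli_channel_def)

lemma mtrace_mult_mat_sum:
  assumes A: "A \<in> carrier_mat d d" and M: "\<And>b. b \<in> B \<Longrightarrow> M b \<in> carrier_mat d d"
  shows "mtrace (A * mat d d (\<lambda>(i,j). \<Sum>b\<in>B. c b * M b $$ (i,j))) = (\<Sum>b\<in>B. c b * mtrace (A * M b))"
proof -
  have "mtrace (A * mat d d (\<lambda>(i,j). \<Sum>b\<in>B. c b * M b $$ (i,j))) =
        (\<Sum>i<d. \<Sum>l<d. \<Sum>b\<in>B. c b * (A $$ (i,l) * M b $$ (l,i)))"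
    using A by (simp add: mtrace_mult_entries sum_distrib_left mult.left_commute)
  also have "\<dots> = (\<Sum>b\<in>B. c b * (\<Sum>i<d. \<Sum>l<d. A $$ (i,l) * M b $$ (l,i)))"
    by (subst sum.swap, subst (2) sum.swap) (simp add: sum_distrib_left)
  also have "\<dots> = (\<Sum>b\<in>B. c b * mtrace (A * M b))"
    using A M by (simp add: mtrace_mult_entries)
  finally show ?thesis .
qed

lemma pauli_channel_pauli:
  assumes a: "length a = n"
  shows "pauli_channel n q (pauli a) = (\<Sum>b\<in>labels n. complex_of_real (q b) * sign_of (anticomm a b)) \<cdot>\<^sub>m pauli a"
proof (rule eq_matI)
  fix i j assume "i < dim_row ((\<Sum>b\<in>labels n. complex_of_real (q b) * sign_of (anticomm a b)) \<cdot>\<^sub>m pauli a)"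
    "j < dim_col ((\<Sum>b\<in>labels n. complex_of_real (q b) * sign_of (anticomm a b)) \<cdot>\<^sub>m pauli a)"
  then have ij: "i < 2^n" "j < 2^n" using a by auto
  have "pauli_channel n q (pauli a) $$ (i,j) =
        (\<Sum>b\<in>labels n. complex_of_real (q b) * (sign_of (anticomm a b) * pauli a $$ (i,j)))"
    using a ij by (auto simp: pauli_channel_def labels_def pauli_conj_pauli intro!: sum.cong)
  then show "pauli_channel n q (pauli a) $$ (i,j) =
      ((\<Sum>b\<in>labels n. complex_of_real (q b) * sign_of (anticomm a b)) \<cdot>\<^sub>m pauli a) $$ (i,j)"
    using a ij by (simp add: sum_distrib_right mult.assoc)
qed (use a in \<open>auto simp: pauli_channel_def\<close>)

lemma pauli_eig_eq:
  assumes a: "length a = n"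
  shows "pauli_eig n q a = (\<Sum>b\<in>labels n. complex_of_real (q b) * sign_of (anticomm a b))"
  unfolding pauli_eig_def
proof (rule the_equality)
  fix c assume "pauli_channel n q (pauli a) = c \<cdot>\<^sub>m pauli a"
  then have "c \<cdot>\<^sub>m pauli a = (\<Sum>b\<in>labels n. complex_of_real (q b) * sign_of (anticomm a b)) \<cdot>\<^sub>m pauli a"
    using pauli_channel_pauli[OF a] by simp
  then have "mtrace (pauli a * (c \<cdot>\<^sub>m pauli a)) =
      mtrace (pauli a * ((\<Sum>b\<in>labels n. complex_of_real (q b) * sign_of (anticomm a b)) \<cdot>\<^sub>m pauli a))"
    by simp
  then show "c = (\<Sum>b\<in>labels n. complex_of_real (q b) * sign_of (anticomm a b))"
    by (simp add: mult_smult_mat mtrace_smult pauli_squared)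
qed (rule pauli_channel_pauli[OF a])

lemma mtrace_pauli_mult_channel:
  assumes a: "length a = n" and \<rho>: "\<rho> \<in> carrier_mat (2^n) (2^n)"
  shows "mtrace (pauli a * pauli_channel n q \<rho>) = pauli_eig n q a * mtrace (pauli a * \<rho>)"
proof -
  have "mtrace (pauli a * (pauli b * \<rho> * pauli b)) = sign_of (anticomm a b) * mtrace (pauli a * \<rho>)"
    if b: "length b = n" for b
  proof -
    have "mtrace (pauli a * (pauli b * \<rho> * pauli b)) = mtrace ((pauli a * pauli b * \<rho>) * pauli b)"
      using a b \<rho> by (simp add: assoc_mult_mat_dims)
    also have "\<dots> = mtrace ((pauli b * pauli a * pauli b) * \<rho>)"
      using a b \<rho> by (subst mtrace_mult_commute[of _ "2^n" "2^n"]) (auto simp: assoc_mult_mat_dims)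
    finally show ?thesis
      using a b \<rho> by (simp add: pauli_conj_pauli smult_mult_mat mtrace_smult)
  qed
  then show ?thesis
    unfolding pauli_channel_def using a \<rho>
    by (subst mtrace_mult_mat_sum) (auto simp: pauli_eig_eq labels_def sum_distrib_right mult.assoc)
qed

lemma pauli_eig_zero_label:
  assumes "prob_vector n q"
  shows "pauli_eig n q (zero_label n) = 1"
proof -
  have "pauli_eig n q (zero_label n) = (\<Sum>b\<in>labels n. complex_of_real (q b))"
    by (auto simp: pauli_eig_eq labels_def sign_of_def anticomm_sym[of "zero_label n"] anticomm_zero_label
        intro!: sum.cong)
  also have "\<dots> = complex_of_real (\<Sum>b\<in>labels n. q b)"
    by (rule of_real_sum[symmetric])
  finally show ?thesis using assms by (simp add: prob_vector_def del: of_real_sum)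
qed

lemma mtrace_pauli_channel:
  assumes q: "prob_vector n q" and \<rho>: "\<rho> \<in> carrier_mat (2^n) (2^n)"
  shows "mtrace (pauli_channel n q \<rho>) = mtrace \<rho>"
  using mtrace_pauli_mult_channel[OF length_zero_label \<rho>, of q] \<rho>
  by (simp add: pauli_zero_label pauli_eig_zero_label[OF q] left_mult_one_mat[OF pauli_channel_carrier])

section \<open>The estimator for a single gate\<close>

lemma Ebasis_carrier[simp]: "Ebasis n x \<in> carrier_mat (2^n) (2^n)"
  by (simp add: Ebasis_def)

lemma dagger_Ebasis: "dagger (Ebasis n x) = Ebasis n x"
  by (rule eq_matI) (auto simp: Ebasis_def)

lemma mtrace_Ebasis_mult:
  assumes x: "x < 2^n" and M: "M \<in> carrier_mat (2^n) (2^n)"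
  shows "mtrace (Ebasis n x * M) = M $$ (x,x)"
proof -
  have "mtrace (Ebasis n x * M) = (\<Sum>i<2^n. \<Sum>l<2^n. if i = x \<and> l = x then M $$ (l,i) else 0)"
    using M by (auto simp: mtrace_mult_entries[of _ "2^n" "2^n"] Ebasis_def intro!: sum.cong)
  also have "\<dots> = (\<Sum>i<2^n. if i = x then M $$ (x,x) else 0)"
    using x by (intro sum.cong refl) (auto simp: sum.delta')
  finally show ?thesis using x by simp
qed

lemma mtrace_mult_Ebasis:
  assumes "x < 2^n" "M \<in> carrier_mat (2^n) (2^n)"
  shows "mtrace (M * Ebasis n x) = M $$ (x,x)"
  using assms by (subst mtrace_mult_commute[of _ "2^n" "2^n"]) (auto simp: mtrace_Ebasis_mult)

lemma braket_Ebasis: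
  assumes "x < 2^n" "X \<rho> \<in> carrier_mat (2^n) (2^n)"
  shows "braket (Ebasis n x) X \<rho> = X \<rho> $$ (x,x)"
  using assms by (simp add: braket_def dagger_Ebasis mtrace_Ebasis_mult)

lemma omega_carrier:
  "clifford n g \<Longrightarrow> A \<in> carrier_mat (2^n) (2^n) \<Longrightarrow> omega g A \<in> carrier_mat (2^n) (2^n)"
  unfolding omega_def by (metis clifford_carrier mult_carrier_mat dagger_carrier)

lemma mtrace_omega:
  assumes g: "clifford n g" and A: "A \<in> carrier_mat (2^n) (2^n)"
  shows "mtrace (omega g A) = mtrace A"
  using mtrace_mult_unitary_conj[OF clifford_unitary[OF g] one_carrier_mat A]
    unitary_matD[OF clifford_unitary[OF g]] A
  by (simp add: omega_def)

lemma mtrace_Zop_mult_omega: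
  assumes g: "clifford n g" and z: "length z = n" and R: "R \<in> carrier_mat (2^n) (2^n)"
    and e: "dagger g * Zop z * g = e \<cdot>\<^sub>m pauli (Xi n z g)"
  shows "mtrace (Zop z * omega g R) = e * mtrace (pauli (Xi n z g) * R)"
  using mtrace_mult_unitary_conj[OF clifford_unitary[OF g] Zop_carrier[of z, unfolded z] R] R
    Xi_conj_Zop(1)[OF g z]
  by (simp add: omega_def e smult_mult_mat mtrace_smult)

lemma diag_labels_iff: "length a = n \<Longrightarrow> a \<in> diag_labels n \<longleftrightarrow> (\<forall>p\<in>set a. \<not> snd p)"
  unfolding diag_labels_def by (auto simp: prod_eq_iff)

text \<open>Only the diagonal Paulis have a nonzero entry at \<open>(0,0)\<close>, which is why the estimator only
  sees the eigenvalues \<open>\<lambda>\<^sub>a\<close> with \<open>a\<close> diagonal.\<close>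

lemma mtrace_Zop_omega_products:
  assumes g: "clifford n g" and z: "length z = n"
  shows "mtrace (Zop z * omega g (pauli_channel n q (Ebasis n 0))) * mtrace (Zop z * omega g (Ebasis n 0)) =
         (if Xi n z g \<in> diag_labels n then pauli_eig n q (Xi n z g) else 0)"
proof -
  let ?a = "Xi n z g"
  obtain e where e: "e = 1 \<or> e = -1" "dagger g * Zop z * g = e \<cdot>\<^sub>m pauli ?a"
    using Xi_conj_Zop(2)[OF g z] by blast
  have l: "length ?a = n" by (rule Xi_conj_Zop(1)[OF g z])
  have P: "mtrace (pauli ?a * Ebasis n 0) = (if ?a \<in> diag_labels n then 1 else 0)"
    using mtrace_mult_Ebasis[OF _ pauli_carrier_length[OF l], of 0] l by (simp add: pauli_index_00 diag_labels_iff)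
  have "mtrace (Zop z * omega g (pauli_channel n q (Ebasis n 0))) * mtrace (Zop z * omega g (Ebasis n 0)) =
        (e * e) * pauli_eig n q ?a * (mtrace (pauli ?a * Ebasis n 0))\<^sup>2"
    using l by (simp add: mtrace_Zop_mult_omega[OF g z _ e(2)] mtrace_pauli_mult_channel power2_eq_square)
  then show ?thesis using e(1) P by auto
qed

definition diag_eig_sum :: "nat \<Rightarrow> (plabel \<Rightarrow> real) \<Rightarrow> complex mat \<Rightarrow> complex" where
  "diag_eig_sum n q g = (\<Sum>z\<in>{z. length z = n}.
     if Xi n z g \<in> diag_labels n - {zero_label n} then pauli_eig n q (Xi n z g) else 0)"

lemma sum_mtrace_Zop_omega_products:
  assumes g: "clifford n g" and q: "prob_vector n q"
  shows "(\<Sum>z\<in>{z. length z = n}. mtrace (Zop z * omega g (pauli_channel n q (Ebasis n 0))) *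
                                  mtrace (Zop z * omega g (Ebasis n 0))) = 1 + diag_eig_sum n q g"
proof -
  have "mtrace (Zop z * omega g (pauli_channel n q (Ebasis n 0))) * mtrace (Zop z * omega g (Ebasis n 0)) =
      (if z = replicate n False then 1 else 0) +
      (if Xi n z g \<in> diag_labels n - {zero_label n} then pauli_eig n q (Xi n z g) else 0)"
    if z: "length z = n" for z
  proof (cases "z = replicate n False")
    case True
    then have "Xi n z g = zero_label n" using Xi_eq_zero_label_iff[OF g z] by simp
    moreover have "zero_label n \<in> diag_labels n" by (simp add: diag_labels_def zero_label_def)
    ultimately show ?thesis
      using True mtrace_Zop_omega_products[OF g z] by (simp add: pauli_eig_zero_label[OF q])
  next
    case False
    then have "Xi n z g \<noteq> zero_label n" using Xi_eq_zero_label_iff[OF g z] by simp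
    then show ?thesis using False by (simp add: mtrace_Zop_omega_products[OF g z])
  qed
  then have "(\<Sum>z\<in>{z. length z = n}. mtrace (Zop z * omega g (pauli_channel n q (Ebasis n 0))) *
                                  mtrace (Zop z * omega g (Ebasis n 0))) =
      (\<Sum>z\<in>{z. length z = n}. (if z = replicate n False then 1 else 0) +
        (if Xi n z g \<in> diag_labels n - {zero_label n} then pauli_eig n q (Xi n z g) else 0))"
    by (intro sum.cong) auto
  then show ?thesis
    by (simp add: diag_eig_sum_def sum.distrib sum.delta')
qed

lemma sum_fhat_gate:
  assumes n: "n \<ge> 1" and g: "clifford n g" and q: "prob_vector n q"
  shows "(\<Sum>x<2^n. braket (Ebasis n x) (\<lambda>\<rho>. omega g (pauli_channel n q \<rho>)) (Ebasis n 0) *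
           ((of_nat (2^n) * braket (Ebasis n x) (omega g) (Ebasis n 0) - 1) / (of_nat (2^n) - 1)))
         = diag_eig_sum n q g / (of_nat (2^n) - 1)"
proof -
  let ?d = "of_nat (2^n) :: complex"
  define M1 where "M1 = omega g (pauli_channel n q (Ebasis n 0))"
  define M2 where "M2 = omega g (Ebasis n 0)"
  have M1: "M1 \<in> carrier_mat (2^n) (2^n)" and M2: "M2 \<in> carrier_mat (2^n) (2^n)"
    using g by (simp_all add: M1_def M2_def omega_carrier)
  have "(\<Sum>x<2^n. M1 $$ (x,x)) = mtrace M1"
    using M1 by (simp add: mtrace_def)
  also have "\<dots> = mtrace (Ebasis n 0)"
    by (simp add: M1_def mtrace_omega[OF g] mtrace_pauli_channel[OF q])
  also have "\<dots> = 1" by (simp add: mtrace_def Ebasis_def)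
  finally have tr: "(\<Sum>x<2^n. M1 $$ (x,x)) = 1" .
  have "?d * (\<Sum>x<2^n. M1 $$ (x,x) * M2 $$ (x,x)) = 1 + diag_eig_sum n q g"
    using sum_mtrace_Zop_products[OF M1 M2] sum_mtrace_Zop_omega_products[OF g q]
    by (simp add: M1_def M2_def)
  moreover have "(\<Sum>x<2^n. braket (Ebasis n x) (\<lambda>\<rho>. omega g (pauli_channel n q \<rho>)) (Ebasis n 0) *
           ((?d * braket (Ebasis n x) (omega g) (Ebasis n 0) - 1) / (?d - 1))) =
        (?d * (\<Sum>x<2^n. M1 $$ (x,x) * M2 $$ (x,x)) - (\<Sum>x<2^n. M1 $$ (x,x))) / (?d - 1)"
    using M1 M2
    by (simp add: braket_Ebasis M1_def M2_def sum_divide_distrib[symmetric] sum_distrib_left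
        sum_subtractf algebra_simps)
  ultimately show ?thesis using tr by simp
qed

lemma sum_lambda_bar:
  assumes T: "clifford_transversal n G" and fin: "finite G" and n: "n \<ge> 1" and G: "G \<noteq> {}"
  shows "(\<Sum>a\<in>diag_labels n - {zero_label n}. lambda_bar n G q a) =
           (of_nat (2^n) + 1) * ((\<Sum>g\<in>G. diag_eig_sum n (q g) g) / of_nat (card G))"
proof -
  let ?D = "diag_labels n - {zero_label n}" and ?Z = "{z :: bool list. length z = n}"
  let ?w = "\<lambda>g z a. if Xi n z g = a then pauli_eig n (q g) a / of_nat (card G) else 0"
  have "finite ?D" by (rule finite_subset[of _ "labels n"]) (auto simp: diag_labels_def labels_def)
  have "lambda_bar n G q a = (of_nat (2^n) + 1) * (\<Sum>z\<in>?Z. \<Sum>g\<in>G. ?w g z a)" if "a \<in> ?D" for a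
    using fin unfolding lambda_bar_def s_weight_nonzero_diag[OF T fin n G that]
    by (simp add: sum.inter_filter)
  then have "(\<Sum>a\<in>?D. lambda_bar n G q a) = (of_nat (2^n) + 1) * (\<Sum>a\<in>?D. \<Sum>z\<in>?Z. \<Sum>g\<in>G. ?w g z a)"
    by (simp add: sum_distrib_left)
  also have "(\<Sum>a\<in>?D. \<Sum>z\<in>?Z. \<Sum>g\<in>G. ?w g z a) = (\<Sum>g\<in>G. \<Sum>z\<in>?Z. \<Sum>a\<in>?D. ?w g z a)"
    by (subst sum.swap, subst (2) sum.swap, subst sum.swap) (rule refl)
  also have "\<dots> = (\<Sum>g\<in>G. \<Sum>z\<in>?Z.
      (if Xi n z g \<in> ?D then pauli_eig n (q g) (Xi n z g) else 0) / of_nat (card G))"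
    using \<open>finite ?D\<close> by (intro sum.cong refl) (simp add: sum.delta')
  also have "\<dots> = (\<Sum>g\<in>G. diag_eig_sum n (q g) g) / of_nat (card G)"
    by (simp add: diag_eig_sum_def sum_divide_distrib)
  finally show ?thesis by simp
qed

lemma average_sum_fhat:
  assumes n: "n \<ge> 1" and T: "clifford_transversal n G" and q: "\<forall>g\<in>G. prob_vector n (q g)"
  shows "(\<Sum>g\<in>G. 1 / of_nat (card G) *
          (\<Sum>x<2^n. braket (Ebasis n x) (\<lambda>\<rho>. omega g (pauli_channel n (q g) \<rho>)) (Ebasis n 0) *
             ((of_nat (2^n) * braket (Ebasis n x) (omega g) (Ebasis n 0) - 1) / (of_nat (2^n) - 1)))) =
        (\<Sum>g\<in>G. diag_eig_sum n (q g) g) / of_nat (card G) / (of_nat (2^n) - 1)"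
proof -
  have "(\<Sum>g\<in>G. 1 / of_nat (card G) *
          (\<Sum>x<2^n. braket (Ebasis n x) (\<lambda>\<rho>. omega g (pauli_channel n (q g) \<rho>)) (Ebasis n 0) *
             ((of_nat (2^n) * braket (Ebasis n x) (omega g) (Ebasis n 0) - 1) / (of_nat (2^n) - 1)))) =
        (\<Sum>g\<in>G. 1 / of_nat (card G) * (diag_eig_sum n (q g) g / (of_nat (2^n) - 1)))"
    by (intro sum.cong refl) (simp only: sum_fhat_gate[OF n transversal_clifford[OF T] q[rule_format]])
  then show ?thesis
    by (simp add: sum_divide_distrib[symmetric] sum_distrib_left[symmetric])
qed

lemma divide_eq_factors_cancel:
  fixes x S :: "'a::field"
  assumes "x + 1 \<noteq> 0" "x - 1 \<noteq> 0"
  shows "S / (x - 1) = 1 / (x + 1) * (1 / (x - 1)) * ((x + 1) * S)"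
proof -
  have "x * x - 1 = (x - 1) * (x + 1)" by (simp add: algebra_simps)
  then have "x * x - 1 \<noteq> 0" using assms by simp
  then show ?thesis using assms by (simp add: field_simps)
qed

lemma of_nat_two_power_minus_one_neq_zero:
  assumes "n \<ge> 1"
  shows "of_nat (2^n) - (1::'a::ring_char_0) \<noteq> 0"
proof
  assume "of_nat (2^n) - (1::'a) = 0"
  then have "of_nat (2^n) = (of_nat 1 :: 'a)" by simp
  then have "(2::nat)^n = 1" by (simp only: of_nat_eq_iff)
  then show False using power_increasing[of 1 n "2::nat"] assms by simp
qed

theorem lemma7:
  fixes n :: nat and G :: "complex mat set" and q :: "complex mat \<Rightarrow> plabel \<Rightarrow> real"
  assumes "n \<ge> 1"
    and "clifford_transversal n G"
    and "\<forall>g\<in>G. prob_vector n (q g)"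
  shows "(let d = (2::nat)^n;
              fhat = (\<lambda>g x. (of_nat d * braket (Ebasis n x) (omega g) (Ebasis n 0) - 1) / (of_nat d - 1));
              px = (\<lambda>g x. braket (Ebasis n x) (\<lambda>\<rho>. omega g (pauli_channel n (q g) \<rho>)) (Ebasis n 0))
          in (\<Sum>g\<in>G. (1 / of_nat (card G)) * (\<Sum>x<d. px g x * fhat g x)))
        = 1 / (of_nat (2^n) + 1) * (1 / (of_nat (2^n) - 1)) *
            (\<Sum>a\<in>diag_labels n - {zero_label n}. lambda_bar n G q a)"
proof (cases "finite G \<and> G \<noteq> {}")
  case True
  then have fin: "finite G" and ne: "G \<noteq> {}" by auto
  have "of_nat (2^n) + (1::complex) \<noteq> 0"
    by (metis of_nat_1 of_nat_add of_nat_eq_0_iff add_is_0 one_neq_zero)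
  then show ?thesis
    unfolding Let_def average_sum_fhat[OF assms] sum_lambda_bar[OF assms(2) fin assms(1) ne]
    by (rule divide_eq_factors_cancel[OF _ of_nat_two_power_minus_one_neq_zero[OF assms(1)]])
next
  case False
  then have "card G = 0" by auto
  then show ?thesis by (simp add: lambda_bar_def s_weight_def)
qed

end
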